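(* Let $p$ be a prime and $G=\mathbb{Z}\times\mathbb{Z}_p=\langle z\rangle\times\langle a\rangle$. If $\mathcal{S}$ is a Schur ring over $G$ such that $\langle a^iz\rangle$ is an $\mathcal{S}$-subgroup for some integer $i$, then $\mathcal{S}$ is an automorphic Schur ring.
   Context: $F$ is a field of characteristic $0$; $\mathbb{Z}=\langle z\rangle$ infinite cyclic, $\mathbb{Z}_p=\langle a\rangle$ cyclic of order $p$, written multiplicatively. For finite $C\subseteq G$, $\overline{C}=\sum_{g\in C}g$ and $C^*=\{g^{-1}:g\in C\}$. A Schur ring over $G$ is a subspace $\mathcal{S}=\mathrm{Span}_F\{\overline{C}:C\in\mathcal{D}\}$ of $F[G]$, where $\mathcal{D}$ is a partition of $G$ into finite subsets with $\{1\}\in\mathcal{D}$, $C\in\mathcal{D}\Rightarrow C^*\in\mathcal{D}$, and each $\overline{C}\,\overline{D}$ a finite $F$-linear combination of the $\overline{E}$, $E\in\mathcal{D}$. An $\mathcal{S}$-subgroup is a subgroup that is a union of members of $\mathcal{D}$. $\mathcal{S}$ is automorphic if $\mathcal{S}=F[G]^{\mathcal{H}}$ (elements fixed by $\mathcal{H}$; classes are the $\mathcal{H}$-orbits) for some finite $\mathcal{H}\le\operatorname{Aut}(G)$. *)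

theory Defs
  imports "HOL-Algebra.Algebra" "HOL-Library.Disjoint_Sets"
begin

text \<open>Elements of the group algebra F[G] are finitely supported functions
  from the carrier of G to F (extended by 0 outside the carrier).\<close>

definition group_algebra :: "('g, 'm) monoid_scheme \<Rightarrow> ('g \<Rightarrow> 'f::field) set" where
  "group_algebra G = {x. finite {g. x g \<noteq> 0} \<and> {g. x g \<noteq> 0} \<subseteq> carrier G}"

definition class_sum :: "'g set \<Rightarrow> 'g \<Rightarrow> 'f::field" where
  "class_sum C = (\<lambda>g. if g \<in> C then 1 else 0)"

definition class_prod :: "('g, 'm) monoid_scheme \<Rightarrow> 'g set \<Rightarrow> 'g set \<Rightarrow> 'g \<Rightarrow> 'f::field" where
  "class_prod G C D = (\<lambda>g. \<Sum>c\<in>C. \<Sum>d\<in>D. if c \<otimes>\<^bsub>G\<^esub> d = g then 1 else 0)"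

definition schur_span :: "'f itself \<Rightarrow> 'g set set \<Rightarrow> ('g \<Rightarrow> 'f::field) set" where
  "schur_span TYPE('f) \<D> = {x. \<exists>Cs (c :: 'g set \<Rightarrow> 'f). finite Cs \<and> Cs \<subseteq> \<D> \<and>
      x = (\<lambda>g. \<Sum>C\<in>Cs. c C * class_sum C g)}"

text \<open>D is the partition of a Schur ring over G (with coefficients in F);
  the Schur ring itself is schur_span TYPE('f) D.\<close>

definition schur_partition :: "'f::field itself \<Rightarrow> ('g, 'm) monoid_scheme \<Rightarrow> 'g set set \<Rightarrow> bool" where
  "schur_partition TYPE('f) G \<D> \<longleftrightarrow>
     partition_on (carrier G) \<D> \<and>
     (\<forall>C\<in>\<D>. finite C) \<and>
     {\<one>\<^bsub>G\<^esub>} \<in> \<D> \<and>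
     (\<forall>C\<in>\<D>. (\<lambda>g. inv\<^bsub>G\<^esub> g) ` C \<in> \<D>) \<and>
     (\<forall>C\<in>\<D>. \<forall>D\<in>\<D>. (class_prod G C D :: 'g \<Rightarrow> 'f) \<in> schur_span TYPE('f) \<D>)"

definition S_subgroup :: "('g, 'm) monoid_scheme \<Rightarrow> 'g set set \<Rightarrow> 'g set \<Rightarrow> bool" where
  "S_subgroup G \<D> K \<longleftrightarrow> subgroup K G \<and> (\<exists>Ds\<subseteq>\<D>. K = \<Union>Ds)"

definition fixed_space :: "'f itself \<Rightarrow> ('g, 'm) monoid_scheme \<Rightarrow> ('g \<Rightarrow> 'g) set \<Rightarrow> ('g \<Rightarrow> 'f::field) set" where
  "fixed_space TYPE('f) G H = {x \<in> group_algebra G. \<forall>\<sigma>\<in>H. \<forall>g\<in>carrier G. x (\<sigma> g) = x g}"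

definition automorphic_schur :: "'f::field itself \<Rightarrow> ('g, 'm) monoid_scheme \<Rightarrow> 'g set set \<Rightarrow> bool" where
  "automorphic_schur TYPE('f) G \<D> \<longleftrightarrow>
     (\<exists>H. finite H \<and> subgroup H (AutoGroup G) \<and>
          schur_span TYPE('f) \<D> = fixed_space TYPE('f) G H)"

text \<open>G = Z x Z_p, written additively in the components: z = (1,0), a = (0,1).\<close>

definition ZxZp :: "nat \<Rightarrow> (int \<times> int) monoid" where
  "ZxZp p = integer_group \<times>\<times> integer_mod_group p"

end

theory Submission
  imports Defs "HOL-Number_Theory.Cong"
begin

(* Write G additively as Z x Z_p with z = (1, 0) and a = (0, 1).  The shear
   (x, y) |-> (x, y - i x) is an automorphism taking <a^i z> to <z>, so we may assume
   that <z> is an S-subgroup.  Counting q-tuples of elements of a class with prescribed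
   sum modulo a prime q (Frobenius) gives Schur's multiplier theorem: g |-> g^m maps a
   class into a class if m is prime to p, or if the class lies in <z>.  Consequently
   the classes in <z> are {z^n, z^-n}, classes meeting <a> stay in <a>, and each class
   lies at a fixed distance |x| from <a>.  Counting the neighbours g z^(+-1) of g that
   lie in a given class shows that moving one step away from <a> maps classes onto
   classes.  Hence every class is determined by the classes of a and z a, and the
   elements z^e a^u of the class of z a define automorphisms z |-> z^e, a |-> a^u whose
   orbits are exactly the classes.  The classes are therefore the orbits of their full
   stabilizer in Aut G, which is finite because an automorphism is determined by the
   images of z and a. *)

section \<open>Schur rings whose classes are orbits of automorphisms\<close>

lemma sum_class_sum_partition:
  assumes part: "partition_on A \<D>" and Cs: "finite Cs" "Cs \<subseteq> \<D>" and W: "W \<in> \<D>" "g \<in> W"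
  shows "(\<Sum>C\<in>Cs. c C * (class_sum C g :: 'f::field)) = (if W \<in> Cs then c W else 0)"
proof -
  have "(\<Sum>C\<in>Cs. c C * class_sum C g) = (\<Sum>C\<in>Cs. if C = W then c W else 0)"
  proof (rule sum.cong[OF refl])
    fix C assume "C \<in> Cs"
    then have "g \<in> C \<longleftrightarrow> C = W"
      using part Cs W unfolding partition_on_def disjoint_def by blast
    then show "c C * class_sum C g = (if C = W then c W else 0)"
      unfolding class_sum_def by auto
  qed
  then show ?thesis using Cs(1) by simp
qed

lemma schur_span_const_on_class:
  assumes part: "partition_on A \<D>" and x: "x \<in> schur_span TYPE('f::field) \<D>"
    and W: "W \<in> \<D>" "g \<in> W" "g' \<in> W"
  shows "(x :: 'g \<Rightarrow> 'f) g = x g'"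
proof -
  obtain Cs c where Cs: "finite Cs" "Cs \<subseteq> \<D>" and x_eq: "x = (\<lambda>g. \<Sum>C\<in>Cs. c C * class_sum C g)"
    using x unfolding schur_span_def by blast
  show ?thesis
    unfolding x_eq
    using sum_class_sum_partition[OF part Cs W(1,2), where c = c]
      sum_class_sum_partition[OF part Cs W(1,3), where c = c] by simp
qed

lemma class_constant_mem_schur_span:
  assumes part: "partition_on A \<D>"
    and supp: "finite {g. x g \<noteq> 0}" "{g. x g \<noteq> 0} \<subseteq> A"
    and const: "\<And>C g g'. C \<in> \<D> \<Longrightarrow> g \<in> C \<Longrightarrow> g' \<in> C \<Longrightarrow> x g' = x g"
  shows "(x :: 'g \<Rightarrow> 'f::field) \<in> schur_span TYPE('f) \<D>"
proof -
  have disj: "C = C'" if "C \<in> \<D>" "C' \<in> \<D>" "g \<in> C" "g \<in> C'" for C C' g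
    using part that unfolding partition_on_def disjoint_def by blast
  define Cs where "Cs = {C\<in>\<D>. \<exists>g\<in>C. x g \<noteq> 0}"
  have "Cs \<subseteq> (\<lambda>g. THE C. C \<in> \<D> \<and> g \<in> C) ` {g. x g \<noteq> 0}"
  proof
    fix C assume "C \<in> Cs"
    then obtain g where g: "C \<in> \<D>" "g \<in> C" "x g \<noteq> 0" unfolding Cs_def by auto
    then have "C = (THE C. C \<in> \<D> \<and> g \<in> C)"
      by (intro the_equality[symmetric]) (use disj in blast)+
    then show "C \<in> (\<lambda>g. THE C. C \<in> \<D> \<and> g \<in> C) ` {g. x g \<noteq> 0}"
      using g(3) by (intro image_eqI) simp_all
  qed
  then have fin: "finite Cs" using supp(1) finite_surj by blast
  define c where "c C = x (SOME g. g \<in> C)" for C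
  have "x g = (\<Sum>C\<in>Cs. c C * class_sum C g)" for g
  proof (cases "\<exists>W\<in>\<D>. g \<in> W")
    case False
    then have "x g = 0" using supp part unfolding partition_on_def by auto
    moreover have "(\<Sum>C\<in>Cs. c C * class_sum C g) = 0"
      using False unfolding Cs_def class_sum_def by (intro sum.neutral) auto
    ultimately show ?thesis by simp
  next
    case True
    then obtain W where W: "W \<in> \<D>" "g \<in> W" by blast
    have Cs_D: "Cs \<subseteq> \<D>" unfolding Cs_def by auto
    have "(\<Sum>C\<in>Cs. c C * class_sum C g) = (if W \<in> Cs then c W else 0)"
      by (rule sum_class_sum_partition[OF part fin Cs_D W])
    also have "\<dots> = x g"
    proof (cases "W \<in> Cs")
      case True
      have "(SOME g. g \<in> W) \<in> W" using W by (metis someI_ex)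
      then show ?thesis using True const[OF W(1) W(2)] unfolding c_def by simp
    qed (use W Cs_def in auto)
    finally show ?thesis by simp
  qed
  moreover have "Cs \<subseteq> \<D>" unfolding Cs_def by auto
  ultimately show ?thesis unfolding schur_span_def using fin by blast
qed

lemma fixed_space_subset_schur_span:
  assumes part: "partition_on (carrier G) \<D>"
    and trans: "\<And>C g g'. C \<in> \<D> \<Longrightarrow> g \<in> C \<Longrightarrow> g' \<in> C \<Longrightarrow> \<exists>\<sigma>\<in>H. \<sigma> g = g'"
  shows "fixed_space TYPE('f::field) G H \<subseteq> schur_span TYPE('f) \<D>"
proof
  fix x :: "'a \<Rightarrow> 'f" assume x: "x \<in> fixed_space TYPE('f) G H"
  have supp: "finite {g. x g \<noteq> 0}" "{g. x g \<noteq> 0} \<subseteq> carrier G"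
    using x unfolding fixed_space_def group_algebra_def by auto
  have "x g' = x g" if C: "C \<in> \<D>" "g \<in> C" "g' \<in> C" for C g g'
  proof -
    obtain \<sigma> where "\<sigma> \<in> H" "\<sigma> g = g'" using trans[OF C] by blast
    moreover have "g \<in> carrier G" using part C unfolding partition_on_def by auto
    ultimately show ?thesis using x unfolding fixed_space_def by auto
  qed
  then show "x \<in> schur_span TYPE('f) \<D>" by (rule class_constant_mem_schur_span[OF part supp])
qed

lemma schur_span_subset_fixed_space:
  assumes part: "partition_on (carrier G) \<D>" and fin: "\<And>C. C \<in> \<D> \<Longrightarrow> finite C"
    and stab: "\<And>\<sigma> C. \<sigma> \<in> H \<Longrightarrow> C \<in> \<D> \<Longrightarrow> \<sigma> ` C \<subseteq> C"
  shows "schur_span TYPE('f::field) \<D> \<subseteq> fixed_space TYPE('f) G H"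
proof
  fix x :: "'a \<Rightarrow> 'f" assume x: "x \<in> schur_span TYPE('f) \<D>"
  obtain Cs c where Cs: "finite Cs" "Cs \<subseteq> \<D>" and x_eq: "x = (\<lambda>g. \<Sum>C\<in>Cs. c C * class_sum C g)"
    using x unfolding schur_span_def by blast
  have "{g. x g \<noteq> 0} \<subseteq> \<Union>Cs"
  proof
    fix g assume "g \<in> {g. x g \<noteq> 0}"
    then obtain C where "C \<in> Cs" "c C * class_sum C g \<noteq> 0"
      unfolding x_eq by (auto elim: sum.not_neutral_contains_not_neutral)
    then show "g \<in> \<Union>Cs" unfolding class_sum_def by (auto split: if_splits)
  qed
  moreover have "finite (\<Union>Cs)" "\<Union>Cs \<subseteq> carrier G"
    using Cs fin part unfolding partition_on_def by auto
  ultimately have "x \<in> group_algebra G"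
    unfolding group_algebra_def by (auto intro: finite_subset)
  moreover have "x (\<sigma> g) = x g" if \<sigma>: "\<sigma> \<in> H" and g: "g \<in> carrier G" for \<sigma> g
  proof -
    obtain W where "W \<in> \<D>" "g \<in> W" using part g unfolding partition_on_def by auto
    then show ?thesis using stab[OF \<sigma>] schur_span_const_on_class[OF part x] by blast
  qed
  ultimately show "x \<in> fixed_space TYPE('f) G H" unfolding fixed_space_def by blast
qed

lemma mult_AutoGroup:
  "\<sigma> \<in> auto G \<Longrightarrow> \<tau> \<in> auto G \<Longrightarrow> \<sigma> \<otimes>\<^bsub>AutoGroup G\<^esub> \<tau> = compose (carrier G) \<sigma> \<tau>"
  by (simp add: AutoGroup_def BijGroup_def auto_def)

lemma inv_AutoGroup:
  assumes "group G" "\<sigma> \<in> auto G"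
  shows "inv\<^bsub>AutoGroup G\<^esub> \<sigma> = (\<lambda>x\<in>carrier G. inv_into (carrier G) \<sigma> x)"
  using group.m_inv_consistent[OF group_BijGroup group.subgroup_auto[OF assms(1)] assms(2)]
    inv_BijGroup[of \<sigma> "carrier G"] assms(2)
  by (simp add: AutoGroup_def auto_def)

lemma inv_AutoGroup_image_subset:
  assumes G: "group G" and aut: "\<sigma> \<in> auto G" and C: "finite C" "C \<subseteq> carrier G"
    and stable: "\<sigma> ` C \<subseteq> C"
  shows "(inv\<^bsub>AutoGroup G\<^esub> \<sigma>) ` C \<subseteq> C"
proof
  have inj: "inj_on \<sigma> (carrier G)" using aut unfolding auto_def Bij_def bij_betw_def by simp
  fix y assume "y \<in> (inv\<^bsub>AutoGroup G\<^esub> \<sigma>) ` C"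
  then obtain x where x: "x \<in> C" "y = inv_into (carrier G) \<sigma> x"
    using inv_AutoGroup[OF G aut] C(2) by auto
  have "\<sigma> ` C = C" using endo_inj_surj[OF C(1) stable] inj_on_subset[OF inj C(2)] by blast
  then obtain z where "z \<in> C" "x = \<sigma> z" using x(1) by blast
  then show "y \<in> C" using x(2) C(2) inv_into_f_f[OF inj] by auto
qed

definition class_stabilizer :: "('g, 'm) monoid_scheme \<Rightarrow> 'g set set \<Rightarrow> ('g \<Rightarrow> 'g) set" where
  "class_stabilizer G \<D> = {\<sigma> \<in> auto G. \<forall>C\<in>\<D>. \<sigma> ` C \<subseteq> C}"

lemma subgroup_class_stabilizer:
  assumes G: "group G" and part: "partition_on (carrier G) \<D>" and fin: "\<And>C. C \<in> \<D> \<Longrightarrow> finite C"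
  shows "subgroup (class_stabilizer G \<D>) (AutoGroup G)"
proof -
  have sub: "C \<subseteq> carrier G" if "C \<in> \<D>" for C using part that unfolding partition_on_def by auto
  have car: "carrier (AutoGroup G) = auto G" by (simp add: AutoGroup_def)
  show ?thesis
  proof (rule group.subgroupI[OF group.AutoGroup[OF G]])
    show "class_stabilizer G \<D> \<subseteq> carrier (AutoGroup G)"
      unfolding class_stabilizer_def car by auto
    show "class_stabilizer G \<D> \<noteq> {}"
      using group.id_in_auto[OF G] sub unfolding class_stabilizer_def
      by (auto intro!: exI[of _ "\<lambda>x\<in>carrier G. x"]) blast
  next
    fix \<sigma> assume \<sigma>: "\<sigma> \<in> class_stabilizer G \<D>"
    then have aut: "\<sigma> \<in> auto G" unfolding class_stabilizer_def by auto
    have "(inv\<^bsub>AutoGroup G\<^esub> \<sigma>) ` C \<subseteq> C" if C: "C \<in> \<D>" for C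
      using inv_AutoGroup_image_subset[OF G aut fin[OF C] sub[OF C]] \<sigma> C
      unfolding class_stabilizer_def by blast
    moreover have "inv\<^bsub>AutoGroup G\<^esub> \<sigma> \<in> auto G"
      using group.inv_closed[OF group.AutoGroup[OF G]] aut car by metis
    ultimately show "inv\<^bsub>AutoGroup G\<^esub> \<sigma> \<in> class_stabilizer G \<D>"
      unfolding class_stabilizer_def by blast
  next
    fix \<sigma> \<tau> assume \<sigma>\<tau>: "\<sigma> \<in> class_stabilizer G \<D>" "\<tau> \<in> class_stabilizer G \<D>"
    then have aut: "\<sigma> \<in> auto G" "\<tau> \<in> auto G" unfolding class_stabilizer_def by auto
    have "\<sigma> \<otimes>\<^bsub>AutoGroup G\<^esub> \<tau> \<in> auto G"
      using monoid.m_closed[OF group.is_monoid[OF group.AutoGroup[OF G]]] aut car by metis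
    moreover have "(\<sigma> \<otimes>\<^bsub>AutoGroup G\<^esub> \<tau>) ` C \<subseteq> C" if C: "C \<in> \<D>" for C
    proof -
      have "(\<sigma> \<otimes>\<^bsub>AutoGroup G\<^esub> \<tau>) ` C = \<sigma> ` \<tau> ` C"
        unfolding mult_AutoGroup[OF aut] image_image using sub[OF C]
        by (intro image_cong) (auto simp: compose_def)
      moreover have "\<tau> ` C \<subseteq> C" "\<sigma> ` C \<subseteq> C" using \<sigma>\<tau> C unfolding class_stabilizer_def by auto
      ultimately show ?thesis by (metis image_mono order_trans)
    qed
    ultimately show "\<sigma> \<otimes>\<^bsub>AutoGroup G\<^esub> \<tau> \<in> class_stabilizer G \<D>"
      unfolding class_stabilizer_def by blast
  qed
qed

lemma automorphic_schurI:
  assumes G: "group G" and part: "partition_on (carrier G) \<D>" and fin: "\<And>C. C \<in> \<D> \<Longrightarrow> finite C"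
    and fin_stab: "finite (class_stabilizer G \<D>)"
    and trans: "\<And>C g g'. C \<in> \<D> \<Longrightarrow> g \<in> C \<Longrightarrow> g' \<in> C \<Longrightarrow> \<exists>\<sigma>\<in>class_stabilizer G \<D>. \<sigma> g = g'"
  shows "automorphic_schur TYPE('f::field) G \<D>"
proof -
  have "schur_span TYPE('f) \<D> \<subseteq> fixed_space TYPE('f) G (class_stabilizer G \<D>)"
    by (rule schur_span_subset_fixed_space[OF part fin]) (auto simp: class_stabilizer_def)
  moreover have "fixed_space TYPE('f) G (class_stabilizer G \<D>) \<subseteq> schur_span TYPE('f) \<D>"
    by (rule fixed_space_subset_schur_span[OF part trans])
  ultimately have "schur_span TYPE('f) \<D> = fixed_space TYPE('f) G (class_stabilizer G \<D>)"
    by (rule subset_antisym)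
  then show ?thesis
    unfolding automorphic_schur_def using fin_stab subgroup_class_stabilizer[OF G part fin] by blast
qed

lemma Union_subset_mem_class:
  assumes "partition_on A P" "Ds \<subseteq> P" "C \<in> P" "x \<in> C" "y \<in> C" "x \<in> \<Union>Ds"
  shows "y \<in> \<Union>Ds"
proof -
  obtain C' where C': "C' \<in> Ds" "x \<in> C'" using assms(6) by blast
  then have "C' = C"
    using disjointD[OF partition_onD2[OF assms(1)], of C' C] assms(2-4) by blast
  then show ?thesis using assms(5) C'(1) by blast
qed

section \<open>Lists of prime length under rotation\<close>

lemma rotate_mult_eq_self:
  assumes "rotate k xs = xs"
  shows "rotate (k * t) xs = xs"
proof (induction t)
  case (Suc t)
  have "rotate (k * Suc t) xs = rotate k (rotate (k * t) xs)"
    by (simp add: rotate_rotate add.commute)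
  then show ?case using Suc assms by simp
qed simp

lemma rotate_eq_self_prime_length_imp_constant:
  assumes q: "Factorial_Ring.prime (q::nat)" and len: "length xs = q" and k: "0 < k" "k < q"
    and rot: "rotate k xs = xs"
  shows "set xs \<subseteq> {xs ! 0}"
proof -
  have "coprime k q"
    using k prime_imp_coprime[OF q, of k] by (simp add: nat_dvd_not_less coprime_commute)
  then obtain t where t: "[k * t = 1] (mod q)"
    using cong_solve_coprime_nat by auto
  have "(k * t) mod q = 1"
    using t prime_gt_1_nat[OF q] unfolding cong_def by simp
  then have rot1: "rotate1 xs = xs"
    using rotate_mult_eq_self[OF rot, of t] len rotate_conv_mod[of "k * t" xs] by simp
  have "xs ! n = xs ! 0" if "n < q" for n
    using that
  proof (induction n)
    case (Suc n)
    then show ?case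
      using nth_rotate1[of n xs] rot1 len by simp
  qed simp
  then show ?thesis using len by (auto simp: in_set_conv_nth)
qed

lemma inj_on_rotate_prime_length:
  assumes q: "Factorial_Ring.prime (q::nat)" and len: "length xs = q" and nonconst: "\<nexists>c. set xs \<subseteq> {c}"
  shows "inj_on (\<lambda>k. rotate k xs) {..<q}"
proof -
  have "rotate i xs \<noteq> rotate j xs" if ij: "i < j" "j < q" for i j
  proof
    assume eq: "rotate i xs = rotate j xs"
    have "rotate (j - i) (rotate i xs) = rotate j xs"
      using ij by (simp add: rotate_rotate)
    then have "rotate (j - i) (rotate i xs) = rotate i xs"
      using eq by simp
    then have "set (rotate i xs) \<subseteq> {rotate i xs ! 0}"
      using rotate_eq_self_prime_length_imp_constant[OF q, of "rotate i xs" "j - i"] len ij by simp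
    then show False using nonconst by simp
  qed
  then show ?thesis
    by (intro inj_onI) (metis lessThan_iff linorder_neqE_nat)
qed

definition rotations :: "'a list \<Rightarrow> 'a list set" where
  "rotations xs = range (\<lambda>k. rotate k xs)"

lemma rotations_eq_image:
  assumes "xs \<noteq> []"
  shows "rotations xs = (\<lambda>k. rotate k xs) ` {..<length xs}"
proof -
  have "rotate k xs \<in> (\<lambda>k. rotate k xs) ` {..<length xs}" for k
    using assms rotate_conv_mod[of k xs] by (intro image_eqI[of _ _ "k mod length xs"]) auto
  then show ?thesis unfolding rotations_def by auto
qed

lemma self_in_rotations: "xs \<in> rotations xs"
  unfolding rotations_def by (metis id_apply rangeI rotate0)

lemma rotations_trans: "ys \<in> rotations xs \<Longrightarrow> rotations ys \<subseteq> rotations xs"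
  unfolding rotations_def by (auto simp: rotate_rotate)

lemma rotations_sym: "ys \<in> rotations xs \<Longrightarrow> xs \<in> rotations ys"
proof -
  assume "ys \<in> rotations xs"
  then obtain i where i: "ys = rotate i xs" unfolding rotations_def by auto
  show "xs \<in> rotations ys"
  proof (cases "xs = []")
    case False
    let ?n = "length xs"
    have "rotate (?n - i mod ?n) ys = rotate (?n - i mod ?n + i mod ?n) xs"
      using i by (simp add: rotate_rotate rotate_conv_mod[of i xs])
    also have "\<dots> = xs" using False by simp
    finally show ?thesis unfolding rotations_def by (metis rangeI)
  qed (use i in \<open>simp add: rotations_def\<close>)
qed

lemma card_rotations_prime_length:
  assumes "Factorial_Ring.prime (q::nat)" "length xs = q" "\<nexists>c. set xs \<subseteq> {c}"
  shows "card (rotations xs) = q"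
proof -
  have "xs \<noteq> []" using assms(1,2) by auto
  then show ?thesis
    using assms inj_on_rotate_prime_length[OF assms] by (simp add: rotations_eq_image card_image)
qed

lemma prime_dvd_card_rotation_closed:
  assumes q: "Factorial_Ring.prime (q::nat)" and fin: "finite S"
    and len: "\<And>xs. xs \<in> S \<Longrightarrow> length xs = q"
    and nonconst: "\<And>xs. xs \<in> S \<Longrightarrow> \<nexists>c. set xs \<subseteq> {c}"
    and closed: "\<And>xs. xs \<in> S \<Longrightarrow> rotate1 xs \<in> S"
  shows "q dvd card S"
proof -
  have "rotate k xs \<in> S" if "xs \<in> S" for k xs
    using that by (induction k) (auto intro: closed)
  then have S_eq: "S = \<Union> (rotations ` S)"
    using self_in_rotations unfolding rotations_def by blast
  have "q dvd card (\<Union> (rotations ` S))"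
  proof (rule dvd_partition)
    show "finite (\<Union> (rotations ` S))" using S_eq fin by simp
    show "\<forall>c\<in>rotations ` S. q dvd card c"
      using card_rotations_prime_length[OF q] len nonconst by (metis dvd_refl imageE)
    show "\<forall>c1\<in>rotations ` S. \<forall>c2\<in>rotations ` S. c1 \<noteq> c2 \<longrightarrow> c1 \<inter> c2 = {}"
    proof (intro ballI impI)
      fix c1 c2 assume c: "c1 \<in> rotations ` S" "c2 \<in> rotations ` S" "c1 \<noteq> c2"
      show "c1 \<inter> c2 = {}"
      proof (rule ccontr)
        assume "c1 \<inter> c2 \<noteq> {}"
        then obtain ys where "ys \<in> c1" "ys \<in> c2" by blast
        with c have "c1 = rotations ys" "c2 = rotations ys"
          using rotations_trans rotations_sym by (blast intro!: subset_antisym)+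
        with c show False by simp
      qed
    qed
  qed
  then show ?thesis using S_eq by simp
qed

section \<open>The group \<open>\<int> \<times> \<int>\<^sub>P\<close> in coordinates\<close>

text \<open>The group \<open>\<int> \<times> \<int>\<^sub>P\<close> is modelled additively on \<open>\<int> \<times> {0..<P}\<close>; the element \<open>z\<^sup>x a\<^sup>y\<close>
  is the pair \<open>(x, y)\<close>.  \<open>prod_coeff P C E g\<close> is the coefficient of \<open>g\<close> in \<open>C\<^bold>\<cdot>E\<close>.\<close>

definition zp_carrier :: "int \<Rightarrow> (int \<times> int) set" where
  "zp_carrier P = UNIV \<times> {0..<P}"

definition zp_minus :: "int \<Rightarrow> int \<times> int \<Rightarrow> int \<times> int \<Rightarrow> int \<times> int" where
  "zp_minus P g c = (fst g - fst c, (snd g - snd c) mod P)"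

definition zp_uminus :: "int \<Rightarrow> int \<times> int \<Rightarrow> int \<times> int" where
  "zp_uminus P g = (- fst g, (- snd g) mod P)"

definition zp_pow :: "int \<Rightarrow> int \<Rightarrow> int \<times> int \<Rightarrow> int \<times> int" where
  "zp_pow P m g = (m * fst g, (m * snd g) mod P)"

definition zp_auto :: "int \<Rightarrow> int \<Rightarrow> int \<Rightarrow> int \<times> int \<Rightarrow> int \<times> int" where
  "zp_auto P e u g = (e * fst g, (u * snd g) mod P)"

definition prod_coeff :: "int \<Rightarrow> (int \<times> int) set \<Rightarrow> (int \<times> int) set \<Rightarrow> int \<times> int \<Rightarrow> nat" where
  "prod_coeff P C E g = card {c\<in>C. zp_minus P g c \<in> E}"

definition zp_line :: "int \<Rightarrow> int \<Rightarrow> (int \<times> int) set" where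
  "zp_line P j = {x. snd x = (fst x * j) mod P}"

lemma mem_zp_carrier_iff: "g \<in> zp_carrier P \<longleftrightarrow> 0 \<le> snd g \<and> snd g < P"
  unfolding zp_carrier_def by (cases g) auto

lemma pair_mem_zp_carrier_iff [simp]: "(x, y) \<in> zp_carrier P \<longleftrightarrow> 0 \<le> y \<and> y < P"
  unfolding zp_carrier_def by auto

lemma zp_minus_mem [simp]: "P > 0 \<Longrightarrow> zp_minus P g c \<in> zp_carrier P"
  and zp_uminus_mem [simp]: "P > 0 \<Longrightarrow> zp_uminus P g \<in> zp_carrier P"
  and zp_pow_mem [simp]: "P > 0 \<Longrightarrow> zp_pow P m g \<in> zp_carrier P"
  and zp_auto_mem [simp]: "P > 0 \<Longrightarrow> zp_auto P e u g \<in> zp_carrier P"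
  unfolding zp_minus_def zp_uminus_def zp_pow_def zp_auto_def by (simp_all add: mem_zp_carrier_iff)

lemma zp_uminus_uminus: "g \<in> zp_carrier P \<Longrightarrow> zp_uminus P (zp_uminus P g) = g"
  unfolding zp_uminus_def by (cases g) (auto simp: mod_minus_eq)

lemma zp_pow_one: "g \<in> zp_carrier P \<Longrightarrow> zp_pow P 1 g = g"
  unfolding zp_pow_def by (cases g) auto

lemma zp_pow_mult: "zp_pow P (a * b) g = zp_pow P a (zp_pow P b g)"
  unfolding zp_pow_def by (simp add: mod_mult_right_eq mult.assoc)

lemma zp_auto_comp: "zp_auto P e u (zp_auto P e' u' g) = zp_auto P (e * e') (u * u') g"
  unfolding zp_auto_def by (simp add: mod_mult_right_eq mult.assoc)

lemma zp_auto_commute: "zp_auto P e u (zp_auto P e' u' g) = zp_auto P e' u' (zp_auto P e u g)"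
  by (simp add: zp_auto_comp mult.commute)

lemma zp_auto_on_fst_zero: "fst g = 0 \<Longrightarrow> zp_auto P e u g = zp_pow P u g"
  unfolding zp_pow_def zp_auto_def by simp

lemma zp_auto_inverse:
  assumes "e \<in> {1, -1}" "(u * v) mod P = 1" "g \<in> zp_carrier P"
  shows "zp_auto P e v (zp_auto P e u g) = g"
proof -
  have "(v * u * snd g) mod P = ((v * u) mod P * snd g) mod P"
    by (simp add: mod_mult_left_eq)
  also have "\<dots> = snd g" using assms by (simp add: mult.commute mem_zp_carrier_iff)
  finally show ?thesis using assms(1) unfolding zp_auto_comp by (auto simp: zp_auto_def prod_eq_iff)
qed

lemma zp_uminus_eq_zp_auto: "zp_uminus P g = zp_auto P (-1) (-1) g"
  unfolding zp_uminus_def zp_auto_def by simp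

lemma prime_unit_inverse:
  assumes P: "Factorial_Ring.prime (P::int)" and u: "0 < u" "u < P"
  obtains v where "0 < v" "v < P" "(u * v) mod P = 1"
proof -
  have "coprime u P"
    using u prime_imp_coprime[OF P, of u] by (simp add: zdvd_not_zless coprime_commute)
  then obtain x where x: "[u * x = 1] (mod P)" using cong_solve_coprime_int by blast
  have P1: "P > 1" using P prime_gt_1_int by blast
  have uv: "(u * (x mod P)) mod P = 1"
    using x P1 unfolding cong_def by (simp add: mod_mult_right_eq)
  moreover have "0 < x mod P"
    using uv P1 pos_mod_sign[of P x] by (cases "x mod P = 0") auto
  ultimately show ?thesis using that P1 by simp
qed

section \<open>Schur rings over \<open>\<int> \<times> \<int>\<^sub>P\<close> with \<open>\<langle>z\<rangle>\<close> as S-subgroup\<close>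

text \<open>The hypotheses of the theorem in coordinates: \<open>D\<close> is the partition of a Schur ring over
  \<open>\<int> \<times> \<int>\<^sub>P\<close> (closure under products expressed through the structure constants), and the
  last assumption says that \<open>\<langle>z\<rangle> = \<int> \<times> {0}\<close> is an S-subgroup.\<close>

locale schur_zp =
  fixes P :: int and D :: "(int \<times> int) set set"
  assumes prime_P: "Factorial_Ring.prime P"
    and partition: "partition_on (zp_carrier P) D"
    and finite_class: "\<And>C. C \<in> D \<Longrightarrow> finite C"
    and zero_class: "{(0, 0)} \<in> D"
    and uminus_class: "\<And>C. C \<in> D \<Longrightarrow> zp_uminus P ` C \<in> D"
    and prod_coeff_const: "\<And>C E W g g'. C \<in> D \<Longrightarrow> E \<in> D \<Longrightarrow> W \<in> D \<Longrightarrow> g \<in> W \<Longrightarrow> g' \<in> W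
                 \<Longrightarrow> prod_coeff P C E g = prod_coeff P C E g'"
    and z_subgroup_class: "\<And>C g g'. C \<in> D \<Longrightarrow> g \<in> C \<Longrightarrow> g' \<in> C \<Longrightarrow> snd g = 0 \<Longrightarrow> snd g' = 0"
begin

lemma P_gt_1: "P > 1"
  using prime_P prime_gt_1_int by blast

lemma P_pos [simp]: "P > 0"
  using P_gt_1 by simp

definition cls :: "int \<times> int \<Rightarrow> (int \<times> int) set" where
  "cls g = (THE C. C \<in> D \<and> g \<in> C)"

lemma class_subset: "C \<in> D \<Longrightarrow> C \<subseteq> zp_carrier P"
  using partition unfolding partition_on_def by auto

lemma class_disjoint: "C \<in> D \<Longrightarrow> C' \<in> D \<Longrightarrow> g \<in> C \<Longrightarrow> g \<in> C' \<Longrightarrow> C = C'"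
  using partition unfolding partition_on_def disjoint_def by blast

lemma cls_eq: "C \<in> D \<Longrightarrow> g \<in> C \<Longrightarrow> cls g = C"
  unfolding cls_def by (rule the_equality) (use class_disjoint in blast)+

lemma cls_in_D: "g \<in> zp_carrier P \<Longrightarrow> cls g \<in> D"
  and mem_cls: "g \<in> zp_carrier P \<Longrightarrow> g \<in> cls g"
  using partition cls_eq unfolding partition_on_def by blast+

lemma cls_subset: "g \<in> zp_carrier P \<Longrightarrow> cls g \<subseteq> zp_carrier P"
  using cls_in_D class_subset by blast

lemma finite_cls: "g \<in> zp_carrier P \<Longrightarrow> finite (cls g)"
  using cls_in_D finite_class by blast

lemma cls_mem_carrier: "g \<in> zp_carrier P \<Longrightarrow> g' \<in> cls g \<Longrightarrow> g' \<in> zp_carrier P"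
  using cls_subset by blast

lemma cls_cong: "g \<in> zp_carrier P \<Longrightarrow> g' \<in> cls g \<Longrightarrow> cls g' = cls g"
  using cls_in_D cls_eq by blast

lemma cls_sym: "g \<in> zp_carrier P \<Longrightarrow> g' \<in> cls g \<Longrightarrow> g \<in> cls g'"
  using cls_cong mem_cls by metis

lemma cls_zero: "cls (0, 0) = {(0, 0)}"
  using cls_eq zero_class by blast

lemma cls_uminus: "g \<in> zp_carrier P \<Longrightarrow> cls (zp_uminus P g) = zp_uminus P ` cls g"
  using uminus_class[OF cls_in_D] mem_cls cls_eq by blast

lemma cls_z_subgroup:
  "g \<in> zp_carrier P \<Longrightarrow> snd g = 0 \<Longrightarrow> g' \<in> cls g \<Longrightarrow> snd g' = 0"
  using z_subgroup_class cls_in_D mem_cls by blast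

lemma prod_coeff_cls:
  "C \<in> D \<Longrightarrow> E \<in> D \<Longrightarrow> g \<in> zp_carrier P \<Longrightarrow> g' \<in> cls g
    \<Longrightarrow> prod_coeff P C E g' = prod_coeff P C E g"
  using prod_coeff_const[of C E "cls g" g' g] cls_in_D mem_cls by blast

definition class_fun :: "(int \<times> int \<Rightarrow> 'a) \<Rightarrow> bool" where
  "class_fun f \<longleftrightarrow> (\<forall>g\<in>zp_carrier P. \<forall>g'\<in>cls g. f g' = f g)"

lemma class_funD: "class_fun f \<Longrightarrow> g \<in> zp_carrier P \<Longrightarrow> g' \<in> cls g \<Longrightarrow> f g' = f g"
  unfolding class_fun_def by blast

lemma class_fun_eq_sum_classes:
  fixes f :: "int \<times> int \<Rightarrow> 'a::comm_monoid_add"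
  assumes F: "finite F" "F \<subseteq> zp_carrier P" and supp: "\<And>y. f y \<noteq> 0 \<Longrightarrow> y \<in> F"
    and f: "class_fun f" and y: "y \<in> zp_carrier P"
  shows "f y = (\<Sum>E\<in>cls ` F. if y \<in> E then f (SOME e. e \<in> E) else 0)"
proof (cases "\<exists>E\<in>cls ` F. y \<in> E")
  case True
  then obtain E where E: "E \<in> cls ` F" "y \<in> E" by blast
  have Es_D: "cls ` F \<subseteq> D" using F cls_in_D by auto
  have "(\<Sum>E'\<in>cls ` F. if y \<in> E' then f (SOME e. e \<in> E') else 0)
      = (\<Sum>E'\<in>cls ` F. if E' = E then f (SOME e. e \<in> E) else 0)"
  proof (rule sum.cong[OF refl])
    fix E' assume "E' \<in> cls ` F"
    then have "y \<in> E' \<longleftrightarrow> E' = E" using E Es_D class_disjoint by blast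
    then show "(if y \<in> E' then f (SOME e. e \<in> E') else 0) = (if E' = E then f (SOME e. e \<in> E) else 0)"
      by simp
  qed
  also have "\<dots> = f (SOME e. e \<in> E)" using E F by simp
  also have "\<dots> = f y"
  proof -
    have "cls y = E" using E Es_D cls_eq by blast
    moreover have "(SOME e. e \<in> E) \<in> E" using E by (metis someI_ex)
    ultimately show ?thesis using f y unfolding class_fun_def by metis
  qed
  finally show ?thesis by simp
next
  case False
  then have "f y = 0" using supp mem_cls F by blast
  with False show ?thesis by (simp add: sum.neutral)
qed

text \<open>By the previous lemma the sum is a combination of structure constants.\<close>

lemma class_fun_sum_zp_minus:
  fixes f :: "int \<times> int \<Rightarrow> nat"
  assumes C: "C \<in> D" and F: "finite F" "F \<subseteq> zp_carrier P" and supp: "\<And>y. f y \<noteq> 0 \<Longrightarrow> y \<in> F"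
    and f: "class_fun f"
  shows "class_fun (\<lambda>g. \<Sum>c\<in>C. f (zp_minus P g c))"
  unfolding class_fun_def
proof (intro ballI)
  fix g g' assume g: "g \<in> zp_carrier P" and g': "g' \<in> cls g"
  define val where "val E = f (SOME e. e \<in> E)" for E
  have fin_C: "finite C" using C finite_class by blast
  have "(\<Sum>c\<in>C. f (zp_minus P x c)) = (\<Sum>E\<in>cls ` F. val E * prod_coeff P C E x)" for x
  proof -
    have "(\<Sum>c\<in>C. f (zp_minus P x c))
        = (\<Sum>E\<in>cls ` F. \<Sum>c\<in>C. if zp_minus P x c \<in> E then val E else 0)"
      using class_fun_eq_sum_classes[OF F supp f] unfolding val_def by (simp add: sum.swap[of _ "cls ` F"])
    also have "\<dots> = (\<Sum>E\<in>cls ` F. val E * prod_coeff P C E x)"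
      using fin_C by (simp add: prod_coeff_def sum.If_cases mult.commute Int_def)
    finally show ?thesis .
  qed
  moreover have "cls ` F \<subseteq> D" using F cls_in_D by auto
  ultimately show "(\<Sum>c\<in>C. f (zp_minus P g' c)) = (\<Sum>c\<in>C. f (zp_minus P g c))"
    using prod_coeff_cls[OF C _ g g'] by (auto intro!: sum.cong)
qed

end

definition zp_sum_list :: "int \<Rightarrow> (int \<times> int) list \<Rightarrow> int \<times> int" where
  "zp_sum_list P xs = (sum_list (map fst xs), sum_list (map snd xs) mod P)"

text \<open>\<open>card (tuples P r C g)\<close> is the coefficient of \<open>g\<close> in \<open>C\<^bold>\<cdot>\<dots>\<^bold>\<cdot>C\<close> (\<open>r\<close> factors).\<close>

definition tuples :: "int \<Rightarrow> nat \<Rightarrow> (int \<times> int) set \<Rightarrow> int \<times> int \<Rightarrow> (int \<times> int) list set" where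
  "tuples P r C g = {xs. length xs = r \<and> set xs \<subseteq> C \<and> zp_sum_list P xs = g}"

lemma zp_sum_list_rotate1: "zp_sum_list P (rotate1 xs) = zp_sum_list P xs"
  unfolding zp_sum_list_def by (cases xs) (simp_all add: add.commute)

lemma zp_sum_list_replicate: "zp_sum_list P (replicate n c) = zp_pow P (int n) c"
  unfolding zp_sum_list_def zp_pow_def by (simp add: sum_list_replicate)

lemma zp_sum_list_Cons_eq_iff:
  assumes "g \<in> zp_carrier P"
  shows "zp_sum_list P (c # ys) = g \<longleftrightarrow> zp_sum_list P ys = zp_minus P g c"
proof -
  let ?s = "sum_list (map snd ys)"
  have "(snd c + ?s) mod P = snd g \<longleftrightarrow> (snd c + ?s) mod P = snd g mod P"
    using assms by (simp add: mem_zp_carrier_iff)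
  also have "\<dots> \<longleftrightarrow> ?s mod P = (snd g - snd c) mod P"
    by (simp add: mod_eq_dvd_iff algebra_simps)
  finally show ?thesis unfolding zp_sum_list_def zp_minus_def by (cases g) auto
qed

lemma finite_tuples: "finite C \<Longrightarrow> finite (tuples P r C g)"
  unfolding tuples_def by (rule finite_subset[OF _ finite_lists_length_eq[of C r]]) auto

lemma card_tuples_Suc:
  assumes C: "finite C" and g: "g \<in> zp_carrier P"
  shows "card (tuples P (Suc r) C g) = (\<Sum>c\<in>C. card (tuples P r C (zp_minus P g c)))"
proof -
  have "tuples P (Suc r) C g = (\<Union>c\<in>C. (#) c ` tuples P r C (zp_minus P g c))"
  proof
    show "tuples P (Suc r) C g \<subseteq> (\<Union>c\<in>C. (#) c ` tuples P r C (zp_minus P g c))"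
    proof
      fix xs assume xs: "xs \<in> tuples P (Suc r) C g"
      then obtain c ys where "xs = c # ys" unfolding tuples_def by (cases xs) auto
      with xs show "xs \<in> (\<Union>c\<in>C. (#) c ` tuples P r C (zp_minus P g c))"
        using zp_sum_list_Cons_eq_iff[OF g] unfolding tuples_def by auto
    qed
  qed (use zp_sum_list_Cons_eq_iff[OF g] in \<open>auto simp: tuples_def\<close>)
  moreover have "card (\<Union>c\<in>C. (#) c ` tuples P r C (zp_minus P g c))
      = (\<Sum>c\<in>C. card ((#) c ` tuples P r C (zp_minus P g c)))"
    by (rule card_UN_disjoint) (auto simp: C finite_tuples)
  ultimately show ?thesis by (simp add: card_image)
qed

lemma constant_tuples_eq:
  assumes "q > 0"
  shows "{xs\<in>tuples P q C g. \<exists>c. set xs \<subseteq> {c}} = (\<lambda>c. replicate q c) ` {c\<in>C. zp_pow P (int q) c = g}"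
proof -
  have "xs \<in> tuples P q C g \<and> (\<exists>c. set xs \<subseteq> {c}) \<longleftrightarrow>
      (\<exists>c\<in>C. zp_pow P (int q) c = g \<and> xs = replicate q c)" for xs
  proof
    assume xs: "xs \<in> tuples P q C g \<and> (\<exists>c. set xs \<subseteq> {c})"
    then obtain c where c: "set xs \<subseteq> {c}" by auto
    have xs_C: "length xs = q" "set xs \<subseteq> C" "zp_sum_list P xs = g"
      using xs unfolding tuples_def by auto
    then have rep: "xs = replicate q c"
      using c by (metis replicate_length_same singletonD subsetD)
    then have "c \<in> C" using xs_C assms by simp
    then show "\<exists>c\<in>C. zp_pow P (int q) c = g \<and> xs = replicate q c"
      using rep xs_C by (auto simp: zp_sum_list_replicate)
  qed (use assms in \<open>auto simp: tuples_def zp_sum_list_replicate\<close>)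
  then show ?thesis by blast
qed

lemma card_constant_tuples:
  assumes "q > 0" and inj: "inj_on (zp_pow P (int q)) C"
  shows "card {xs\<in>tuples P q C g. \<exists>c. set xs \<subseteq> {c}} = (if g \<in> zp_pow P (int q) ` C then 1 else 0)"
proof -
  have "{c\<in>C. zp_pow P (int q) c = g} =
      (if g \<in> zp_pow P (int q) ` C then {the_inv_into C (zp_pow P (int q)) g} else {})"
    using inj by (auto simp: the_inv_into_f_f inj_on_eq_iff)
  moreover have "inj_on (\<lambda>c. replicate q c) A" for A
    using assms(1) by (auto intro: inj_onI)
  ultimately show ?thesis unfolding constant_tuples_eq[OF assms(1)] by (simp add: card_image)
qed

context schur_zp
begin

lemma class_fun_card_tuples:
  assumes C: "C \<in> D"
  shows "class_fun (\<lambda>g. card (tuples P r C g))"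
proof (induction r)
  case 0
  have "tuples P 0 C x = (if x = (0, 0) then {[]} else {})" for x
    unfolding tuples_def zp_sum_list_def by auto
  then show ?case
    unfolding class_fun_def using cls_zero cls_cong by (metis mem_cls singletonD)
next
  case (Suc r)
  have fin_C: "finite C" using C finite_class by blast
  define F where "F = zp_sum_list P ` {xs. set xs \<subseteq> C \<and> length xs = r}"
  have "class_fun (\<lambda>g. \<Sum>c\<in>C. card (tuples P r C (zp_minus P g c)))"
  proof (rule class_fun_sum_zp_minus[OF C _ _ _ Suc.IH])
    show "finite F" unfolding F_def using finite_lists_length_eq[OF fin_C] by simp
    show "F \<subseteq> zp_carrier P"
      unfolding F_def zp_sum_list_def by (auto simp: mem_zp_carrier_iff)
    show "y \<in> F" if nonzero: "card (tuples P r C y) \<noteq> 0" for y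
    proof -
      obtain xs where "xs \<in> tuples P r C y" using nonzero by (metis card.empty ex_in_conv)
      then show ?thesis unfolding F_def tuples_def by auto
    qed
  qed
  then show ?case
    unfolding class_fun_def using card_tuples_Suc[OF fin_C] cls_mem_carrier by simp
qed

text \<open>Frobenius: rotation permutes the non-constant \<open>q\<close>-tuples in orbits of size \<open>q\<close>, so modulo
  \<open>q\<close> only the constant tuples \<open>(c, \<dots>, c)\<close> with \<open>q\<^bold>\<cdot>c = g\<close> count.\<close>

lemma card_tuples_prime_mod:
  assumes q: "Factorial_Ring.prime (q::nat)" and C: "C \<in> D"
    and inj: "inj_on (zp_pow P (int q)) C" and g: "g \<in> zp_carrier P"
  shows "card (tuples P q C g) mod q = (if g \<in> zp_pow P (int q) ` C then 1 else 0)"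
proof -
  have q1: "q > 1" using q prime_gt_1_nat by blast
  have fin_C: "finite C" using C finite_class by blast
  define S where "S = tuples P q C g"
  define Con where "Con = {xs\<in>S. \<exists>c. set xs \<subseteq> {c}}"
  define Non where "Non = {xs\<in>S. \<nexists>c. set xs \<subseteq> {c}}"
  have fin_S: "finite S" unfolding S_def using finite_tuples fin_C by blast
  have card_S: "card S = card Con + card Non"
    unfolding Con_def Non_def using fin_S by (subst card_Un_disjoint[symmetric]) (auto intro: arg_cong[where f = card])
  have "q dvd card Non"
  proof (rule prime_dvd_card_rotation_closed[OF q])
    show "finite Non" using fin_S unfolding Non_def by simp
  qed (auto simp: Non_def S_def tuples_def zp_sum_list_rotate1 simp del: subset_singleton_iff)
  have card_Con: "card Con = (if g \<in> zp_pow P (int q) ` C then 1 else 0)"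
    using card_constant_tuples[OF _ inj] q1 unfolding Con_def S_def by simp
  have "card S mod q = card Con mod q"
    using card_S \<open>q dvd card Non\<close> by (simp add: mod_add_right_eq[symmetric])
  then show ?thesis
    using card_Con q1 unfolding S_def by simp
qed

lemma zp_pow_image_cls_iff:
  assumes q: "Factorial_Ring.prime (q::nat)" and C: "C \<in> D"
    and inj: "inj_on (zp_pow P (int q)) C" and g: "g \<in> zp_carrier P" and g': "g' \<in> cls g"
  shows "g' \<in> zp_pow P (int q) ` C \<longleftrightarrow> g \<in> zp_pow P (int q) ` C"
proof -
  have "card (tuples P q C g') = card (tuples P q C g)"
    by (rule class_funD[OF class_fun_card_tuples[OF C] g g'])
  then have "(if g' \<in> zp_pow P (int q) ` C then 1 else 0)
      = (if g \<in> zp_pow P (int q) ` C then 1 else (0::nat))"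
    using card_tuples_prime_mod[OF q C inj g] card_tuples_prime_mod[OF q C inj cls_mem_carrier[OF g g']]
    by simp
  then show ?thesis by (simp split: if_splits)
qed

definition class_closed :: "(int \<times> int) set \<Rightarrow> bool" where
  "class_closed S \<longleftrightarrow> S \<subseteq> zp_carrier P \<and> (\<forall>g\<in>S. cls g \<subseteq> S)"

lemma class_closed_cls: "g \<in> zp_carrier P \<Longrightarrow> class_closed (cls g)"
  unfolding class_closed_def using cls_subset cls_cong by blast

lemma inj_on_zp_pow:
  assumes "m \<noteq> 0" and S: "S \<subseteq> zp_carrier P" and cond: "\<not> P dvd m \<or> (\<forall>g\<in>S. snd g = 0)"
  shows "inj_on (zp_pow P m) S"
proof (rule inj_onI)
  fix x y assume xy: "x \<in> S" "y \<in> S" "zp_pow P m x = zp_pow P m y"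
  then have "fst x = fst y" "(m * snd x) mod P = (m * snd y) mod P"
    using \<open>m \<noteq> 0\<close> unfolding zp_pow_def by auto
  moreover have "snd x = snd y"
  proof (cases "\<not> P dvd m")
    case True
    with calculation(2) have "P dvd snd x - snd y"
      using prime_P by (simp add: mod_eq_dvd_iff prime_dvd_mult_iff right_diff_distrib[symmetric])
    moreover have "x \<in> zp_carrier P" "y \<in> zp_carrier P" using xy S by auto
    ultimately show ?thesis by (simp add: mod_eq_dvd_iff[symmetric] mem_zp_carrier_iff)
  qed (use cond xy in auto)
  ultimately show "x = y" by (simp add: prod_eq_iff)
qed

lemma class_closed_zp_pow_prime:
  assumes q: "Factorial_Ring.prime (q::nat)" and S: "class_closed S"
    and cond: "\<not> P dvd int q \<or> (\<forall>g\<in>S. snd g = 0)"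
  shows "class_closed (zp_pow P (int q) ` S)"
  unfolding class_closed_def
proof (intro conjI ballI subsetI)
  fix g g' assume g: "g \<in> zp_pow P (int q) ` S" and g': "g' \<in> cls g"
  obtain s where s: "s \<in> S" "g = zp_pow P (int q) s" using g by auto
  have s_carrier: "s \<in> zp_carrier P" using S s unfolding class_closed_def by auto
  have cls_s: "cls s \<subseteq> S" using S s unfolding class_closed_def by blast
  have "inj_on (zp_pow P (int q)) (cls s)"
    using q cond cls_s cls_subset[OF s_carrier] by (intro inj_on_zp_pow) auto
  moreover have "g \<in> zp_pow P (int q) ` cls s" using s s_carrier mem_cls by blast
  ultimately have "g' \<in> zp_pow P (int q) ` cls s"
    using zp_pow_image_cls_iff[OF q cls_in_D[OF s_carrier] _ _ g'] s by simp
  then show "g' \<in> zp_pow P (int q) ` S" using cls_s by blast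
qed auto

lemma class_closed_zp_pow:
  assumes "m \<ge> (1::nat)" and S: "class_closed S" and cond: "coprime (int m) P \<or> (\<forall>g\<in>S. snd g = 0)"
  shows "class_closed (zp_pow P (int m) ` S)"
  using assms(1) cond
proof (induction m rule: less_induct)
  case (less m)
  show ?case
  proof (cases "m = 1")
    case True
    have "S \<subseteq> zp_carrier P" using S unfolding class_closed_def by blast
    then have "zp_pow P 1 ` S = id ` S"
      using zp_pow_one by (intro image_cong) auto
    then have "zp_pow P (int m) ` S = S" using True by simp
    then show ?thesis using S by simp
  next
    case False
    then obtain q m' where q: "Factorial_Ring.prime q" and m: "m = q * m'"
      using prime_factor_nat by (metis dvd_def)
    have "m' \<ge> 1" "m' < m" using less.prems(1) m prime_gt_1_nat[OF q] by (simp_all add: Suc_le_eq)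
    moreover have "coprime (int m') P \<or> (\<forall>g\<in>S. snd g = 0)"
      using less.prems(2) m by (auto simp: coprime_mult_left_iff)
    ultimately have IH: "class_closed (zp_pow P (int m') ` S)" using less.IH by blast
    have "\<not> P dvd int q \<or> (\<forall>g\<in>zp_pow P (int m') ` S. snd g = 0)"
    proof (cases "\<forall>g\<in>S. snd g = 0")
      case False
      then have "coprime (int q) P" using less.prems(2) m by (auto simp: coprime_mult_left_iff)
      then show ?thesis using P_gt_1 by (auto dest: coprime_common_divisor)
    qed (auto simp: zp_pow_def)
    then have "class_closed (zp_pow P (int q) ` zp_pow P (int m') ` S)"
      using class_closed_zp_pow_prime[OF q IH] by blast
    moreover have "zp_pow P (int q) ` zp_pow P (int m') ` S = zp_pow P (int m) ` S"
      using m by (auto simp: image_image zp_pow_mult[symmetric] mult.commute)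
    ultimately show ?thesis by simp
  qed
qed

lemma cls_zp_pow_subset:
  assumes "m > 0" and g: "g \<in> zp_carrier P" and cond: "coprime m P \<or> snd g = 0"
  shows "cls (zp_pow P m g) \<subseteq> zp_pow P m ` cls g"
proof -
  have "coprime (int (nat m)) P \<or> (\<forall>g'\<in>cls g. snd g' = 0)"
    using assms cls_z_subgroup[OF g] by auto
  then have "class_closed (zp_pow P m ` cls g)"
    using class_closed_zp_pow[of "nat m", OF _ class_closed_cls[OF g]] \<open>m > 0\<close> by simp
  moreover have "zp_pow P m g \<in> zp_pow P m ` cls g" using mem_cls g by blast
  ultimately show ?thesis unfolding class_closed_def by blast
qed

text \<open>The multiplier \<open>P + 1\<close> fixes \<open>\<langle>a\<rangle>\<close> pointwise but strictly enlarges nonzero first coordinates.\<close>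

lemma cls_fst_zero:
  assumes g: "g \<in> zp_carrier P" "fst g = 0" and y: "y \<in> cls g"
  shows "fst y = 0"
proof -
  have "zp_pow P (P + 1) g = g"
    using g unfolding zp_pow_def by (cases g) (auto simp: algebra_simps mem_zp_carrier_iff)
  then have sub: "cls g \<subseteq> zp_pow P (P + 1) ` cls g"
    using cls_zp_pow_subset[of "P + 1" g] g coprime_add_one_left[of P] P_gt_1 by simp
  show ?thesis using y
  proof (induction "nat \<bar>fst y\<bar>" arbitrary: y rule: less_induct)
    case less
    obtain z where z: "z \<in> cls g" "y = zp_pow P (P + 1) z" using sub less.prems by blast
    then have fst_y: "fst y = (P + 1) * fst z" unfolding zp_pow_def by simp
    show ?case
    proof (rule ccontr)
      assume "fst y \<noteq> 0"
      then have "fst z \<noteq> 0" using fst_y by simp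
      have "\<bar>fst y\<bar> = (P + 1) * \<bar>fst z\<bar>"
        using fst_y P_gt_1 by (simp add: abs_mult del: distrib_right distrib_left)
      then have "\<bar>fst y\<bar> = \<bar>fst z\<bar> + P * \<bar>fst z\<bar>" by (simp add: algebra_simps)
      moreover have "0 < P * \<bar>fst z\<bar>" using \<open>fst z \<noteq> 0\<close> by simp
      ultimately have "nat \<bar>fst z\<bar> < nat \<bar>fst y\<bar>" by linarith
      then have "fst z = 0" using less.hyps z(1) by blast
      with \<open>fst z \<noteq> 0\<close> show False by simp
    qed
  qed
qed

lemma cls_z_axis_unit:
  assumes "c > 0" and e: "(e, 0) \<in> cls (c, 0)" "\<bar>e\<bar> = 1"
  shows "c = 1"
proof -
  have "cls (c, 0) \<subseteq> zp_pow P c ` cls (1, 0)"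
    using cls_zp_pow_subset[of c "(1, 0)"] \<open>c > 0\<close> by (simp add: zp_pow_def)
  then obtain z where "(e, 0) = zp_pow P c z" using e(1) by blast
  then have "e = c * fst z" unfolding zp_pow_def by simp
  then have "\<bar>c\<bar> = 1" using e(2) abs_zmult_eq_1[of c "fst z"] by simp
  then show ?thesis using \<open>c > 0\<close> by simp
qed

lemma cls_one_zero_subset: "cls (1, 0) \<subseteq> {(1, 0), (-1, 0)}"
proof
  fix y assume y: "y \<in> cls (1, 0)"
  have "snd y = 0" using cls_z_subgroup[of "(1, 0)"] y by simp
  then obtain c where yc: "y = (c, 0)" by (cases y) auto
  have one_in: "(1, 0) \<in> cls (c, 0)" using cls_sym[of "(1, 0)" y] y yc by simp
  then have "c \<noteq> 0" using cls_zero by auto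
  moreover have "c = 1" if "c > 0"
    using cls_z_axis_unit[OF that one_in] by simp
  moreover have "c = -1" if "c < 0"
  proof -
    have "cls y = cls (1, 0)" using cls_cong[of "(1, 0)" y] y by simp
    moreover have "zp_uminus P y = (-c, 0)" using yc by (simp add: zp_uminus_def)
    ultimately have "cls (-c, 0) = zp_uminus P ` cls (1, 0)"
      using cls_uminus[of y] yc by simp
    moreover have "zp_uminus P (1, 0) = (-1, 0)" by (simp add: zp_uminus_def)
    ultimately have "(-1, 0) \<in> cls (-c, 0)"
      using mem_cls[of "(1, 0)"] by (metis P_pos image_eqI pair_mem_zp_carrier_iff order_refl)
    then show ?thesis using cls_z_axis_unit[of "-c" "-1"] that by simp
  qed
  ultimately show "y \<in> {(1, 0), (-1, 0)}" using yc by fastforce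
qed

lemma cls_z_axis: "cls (n, 0) \<subseteq> {(n, 0), (-n, 0)}"
proof -
  have pos: "cls (n, 0) \<subseteq> {(n, 0), (-n, 0)}" if "n > 0" for n
  proof -
    have "cls (n, 0) \<subseteq> zp_pow P n ` cls (1, 0)"
      using cls_zp_pow_subset[of n "(1, 0)"] that by (simp add: zp_pow_def)
    also have "\<dots> \<subseteq> zp_pow P n ` {(1, 0), (-1, 0)}" using cls_one_zero_subset by blast
    finally show ?thesis by (simp add: zp_pow_def)
  qed
  consider "n > 0" | "n = 0" | "n < 0" by linarith
  then show ?thesis
  proof cases
    case 3
    have "cls (n, 0) = zp_uminus P ` cls (-n, 0)"
      using cls_uminus[of "(-n, 0)"] by (simp add: zp_uminus_def)
    also have "\<dots> \<subseteq> zp_uminus P ` {(-n, 0), (n, 0)}" using pos[of "-n"] 3 by auto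
    finally show ?thesis by (auto simp: zp_uminus_def)
  qed (use pos cls_zero in auto)
qed

text \<open>Since \<open>g = (x, 0) + (0, y)\<close>, the structure constant of \<open>[(x, 0)]\<^bold>\<cdot>[(0, y)]\<close> at \<open>g\<close>,
  hence at \<open>g'\<close>, is positive; the factors of \<open>g'\<close> lie in \<open>\<langle>z\<rangle>\<close> and \<open>\<langle>a\<rangle>\<close>.\<close>

lemma cls_projections:
  assumes g: "g \<in> zp_carrier P" and g': "g' \<in> cls g"
  shows "(fst g', 0) \<in> cls (fst g, 0)" and "(0, snd g') \<in> cls (0, snd g)"
proof -
  obtain n k where g_nk: "g = (n, k)" by (cases g)
  have k: "0 \<le> k" "k < P" using g g_nk by auto
  have nk: "(n, 0) \<in> zp_carrier P" "(0, k) \<in> zp_carrier P" using k by auto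
  let ?C = "cls (n, 0)" and ?E = "cls (0, k)"
  have "zp_minus P g (n, 0) = (0, k)" unfolding zp_minus_def g_nk using k by simp
  then have "(n, 0) \<in> {c\<in>?C. zp_minus P g c \<in> ?E}" using mem_cls[OF nk(1)] mem_cls[OF nk(2)] by simp
  then have "prod_coeff P ?C ?E g \<noteq> 0"
    unfolding prod_coeff_def using finite_cls[OF nk(1)] by (auto simp: card_eq_0_iff)
  then have "prod_coeff P ?C ?E g' \<noteq> 0"
    using prod_coeff_cls[OF cls_in_D[OF nk(1)] cls_in_D[OF nk(2)] g g'] by simp
  then obtain c where c: "c \<in> ?C" "zp_minus P g' c \<in> ?E"
    unfolding prod_coeff_def by (auto simp: card_eq_0_iff)
  have "snd c = 0" using c(1) cls_z_axis[of n] by auto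
  moreover have "fst (zp_minus P g' c) = 0" using cls_fst_zero[OF nk(2)] c(2) by simp
  moreover have "snd g' mod P = snd g'"
    using cls_mem_carrier[OF g g'] by (simp add: mem_zp_carrier_iff)
  ultimately have "c = (fst g', 0)" "zp_minus P g' c = (0, snd g')"
    unfolding zp_minus_def by (simp_all add: prod_eq_iff)
  then show "(fst g', 0) \<in> cls (fst g, 0)" "(0, snd g') \<in> cls (0, snd g)"
    using c g_nk by auto
qed

lemma abs_fst_cls:
  assumes "g \<in> zp_carrier P" "g' \<in> cls g"
  shows "\<bar>fst g'\<bar> = \<bar>fst g\<bar>"
proof -
  have "(fst g', 0) \<in> {(fst g, 0), (- fst g, 0)}"
    using cls_projections(1)[OF assms] cls_z_axis[of "fst g"] by blast
  then show ?thesis by auto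
qed

end

definition shift_out :: "int \<times> int \<Rightarrow> int \<times> int" where
  "shift_out g = (fst g + sgn (fst g), snd g)"

definition shift_in :: "int \<times> int \<Rightarrow> int \<times> int" where
  "shift_in g = (fst g - sgn (fst g), snd g)"

lemma shift_out_mem [simp]: "shift_out g \<in> zp_carrier P \<longleftrightarrow> g \<in> zp_carrier P"
  and shift_in_mem [simp]: "shift_in g \<in> zp_carrier P \<longleftrightarrow> g \<in> zp_carrier P"
  unfolding shift_out_def shift_in_def by (simp_all add: mem_zp_carrier_iff)

lemma shift_in_out: "fst g \<noteq> 0 \<Longrightarrow> shift_in (shift_out g) = g"
  and shift_out_in: "\<bar>fst g\<bar> \<ge> 2 \<Longrightarrow> shift_out (shift_in g) = g"
  unfolding shift_out_def shift_in_def by (auto simp: sgn_if)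

lemma abs_fst_shift_out: "fst g \<noteq> 0 \<Longrightarrow> \<bar>fst (shift_out g)\<bar> = \<bar>fst g\<bar> + 1"
  and abs_fst_shift_in: "fst g \<noteq> 0 \<Longrightarrow> \<bar>fst (shift_in g)\<bar> = \<bar>fst g\<bar> - 1"
  unfolding shift_out_def shift_in_def by (auto simp: sgn_if)

lemma zp_auto_shift_out: "e \<in> {1, -1} \<Longrightarrow> zp_auto P e u (shift_out g) = shift_out (zp_auto P e u g)"
  unfolding zp_auto_def shift_out_def by (auto simp: sgn_mult algebra_simps)

lemma funpow_shift_out:
  "fst g \<noteq> 0 \<Longrightarrow> (shift_out ^^ j) g = (fst g + int j * sgn (fst g), snd g)"
  by (induction j) (auto simp: shift_out_def sgn_if algebra_simps)

context schur_zp
begin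

text \<open>The number of horizontal neighbours \<open>g \<plusminus> z\<close> of \<open>g\<close> lying in a class \<open>C\<close> is a class
  function of \<open>g\<close>, because \<open>{z, z\<^sup>-\<^sup>1}\<close> is a union of classes.\<close>

definition nbr_count :: "(int \<times> int) set \<Rightarrow> int \<times> int \<Rightarrow> nat" where
  "nbr_count C g = card {v\<in>{(1, 0), (-1, 0)}. zp_minus P g v \<in> C}"

lemma nbr_count_eq:
  assumes "g \<in> zp_carrier P"
  shows "nbr_count C g =
    (if (fst g - 1, snd g) \<in> C then 1 else 0) + (if (fst g + 1, snd g) \<in> C then 1 else 0)"
proof -
  have "snd g mod P = snd g" using assms by (simp add: mem_zp_carrier_iff)
  then have "zp_minus P g (1, 0) = (fst g - 1, snd g)" "zp_minus P g (-1, 0) = (fst g + 1, snd g)"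
    unfolding zp_minus_def by simp_all
  then have "{v\<in>{(1, 0), (-1, 0)}. zp_minus P g v \<in> C} =
      (if (fst g - 1, snd g) \<in> C then {(1, 0)} else {}) \<union>
      (if (fst g + 1, snd g) \<in> C then {(-1, 0)} else {})"
    by auto
  then show ?thesis unfolding nbr_count_def by auto
qed

lemma nbr_count_cls:
  assumes C: "C \<in> D" and g: "g \<in> zp_carrier P" and g': "g' \<in> cls g"
  shows "nbr_count C g' = nbr_count C g"
proof -
  let ?U = "cls (1, 0)"
  have U_D: "?U \<in> D" and one_U: "(1, 0) \<in> ?U" using cls_in_D mem_cls by simp_all
  show ?thesis
  proof (cases "(-1, 0) \<in> ?U")
    case True
    then have "?U = {(1, 0), (-1, 0)}" using cls_one_zero_subset one_U by auto
    then show ?thesis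
      using prod_coeff_cls[OF U_D C g g'] unfolding nbr_count_def prod_coeff_def by simp
  next
    case False
    then have U: "?U = {(1, 0)}" using cls_one_zero_subset one_U by auto
    then have "{(-1, 0)} \<in> D" using uminus_class[OF U_D] by (simp add: zp_uminus_def)
    moreover have "nbr_count C h = prod_coeff P {(1, 0)} C h + prod_coeff P {(-1, 0)} C h" for h
    proof -
      have "{v\<in>{(1, 0), (-1, 0)}. zp_minus P h v \<in> C} =
          {v\<in>{(1, 0)}. zp_minus P h v \<in> C} \<union> {v\<in>{(-1, 0)}. zp_minus P h v \<in> C}"
        by auto
      then show ?thesis
        unfolding nbr_count_def prod_coeff_def by (simp add: card_Un_disjoint disjoint_iff)
    qed
    ultimately show ?thesis
      using prod_coeff_cls[OF U_D C g g'] prod_coeff_cls[of "{(-1, 0)}" C g g'] U C g g' by simp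
  qed
qed

lemma shift_in_mem_iff:
  assumes C: "C \<in> D" "\<forall>x\<in>C. \<bar>fst x\<bar> = n" "n \<ge> 1"
    and h: "h \<in> zp_carrier P" "\<bar>fst h\<bar> = n + 1" and h': "h' \<in> cls h"
  shows "shift_in h' \<in> C \<longleftrightarrow> shift_in h \<in> C"
proof -
  have count: "nbr_count C k = (if shift_in k \<in> C then 1 else 0)"
    if k: "k \<in> zp_carrier P" "\<bar>fst k\<bar> = n + 1" for k
  proof (cases "fst k > 0")
    case True
    have "(fst k + 1, snd k) \<notin> C" using C(2) k(2) True by fastforce
    moreover have "shift_in k = (fst k - 1, snd k)" using True by (simp add: shift_in_def)
    ultimately show ?thesis using nbr_count_eq[OF k(1)] by simp
  next
    case False
    have "(fst k - 1, snd k) \<notin> C" using C(2) k(2) False by fastforce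
    moreover have "shift_in k = (fst k + 1, snd k)" using False k(2) C(3) by (simp add: shift_in_def sgn_if)
    ultimately show ?thesis using nbr_count_eq[OF k(1)] by simp
  qed
  have "\<bar>fst h'\<bar> = n + 1" using abs_fst_cls[OF h(1) h'] h(2) by simp
  then have "(if shift_in h' \<in> C then 1 else 0) = (if shift_in h \<in> C then 1 else (0::nat))"
    using nbr_count_cls[OF C(1) h(1) h'] count[OF h] count[OF cls_mem_carrier[OF h(1) h']] by metis
  then show ?thesis by (simp split: if_splits)
qed

lemma shift_out_mem_iff:
  assumes C: "C \<in> D" "\<forall>x\<in>C. \<bar>fst x\<bar> = n + 1" "n \<ge> 1"
    and h: "h \<in> zp_carrier P" "\<bar>fst h\<bar> = n" and h': "h' \<in> cls h"
  shows "shift_out h' \<in> C \<longleftrightarrow> shift_out h \<in> C"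
proof -
  have count: "nbr_count C k = (if shift_out k \<in> C then 1 else 0)"
    if k: "k \<in> zp_carrier P" "\<bar>fst k\<bar> = n" for k
  proof (cases "fst k > 0")
    case True
    have "(fst k - 1, snd k) \<notin> C" using C(2,3) k(2) True by fastforce
    moreover have "shift_out k = (fst k + 1, snd k)" using True by (simp add: shift_out_def)
    ultimately show ?thesis using nbr_count_eq[OF k(1)] by simp
  next
    case False
    have "(fst k + 1, snd k) \<notin> C" using C(2,3) k(2) False by fastforce
    moreover have "shift_out k = (fst k - 1, snd k)" using False k(2) C(3) by (simp add: shift_out_def sgn_if)
    ultimately show ?thesis using nbr_count_eq[OF k(1)] by simp
  qed
  have "\<bar>fst h'\<bar> = n" using abs_fst_cls[OF h(1) h'] h(2) by simp
  then have "(if shift_out h' \<in> C then 1 else 0) = (if shift_out h \<in> C then 1 else (0::nat))"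
    using nbr_count_cls[OF C(1) h(1) h'] count[OF h] count[OF cls_mem_carrier[OF h(1) h']] by metis
  then show ?thesis by (simp split: if_splits)
qed

lemma cls_shift_out:
  assumes g: "g \<in> zp_carrier P" and "fst g \<noteq> 0"
  shows "cls (shift_out g) = shift_out ` cls g"
proof
  let ?n = "\<bar>fst g\<bar>"
  have g_out: "shift_out g \<in> zp_carrier P" using g by simp
  have lev_g: "\<forall>x\<in>cls g. \<bar>fst x\<bar> = ?n" using abs_fst_cls[OF g] by blast
  have lev_out: "\<forall>x\<in>cls (shift_out g). \<bar>fst x\<bar> = ?n + 1"
    using abs_fst_cls[OF g_out] abs_fst_shift_out[OF \<open>fst g \<noteq> 0\<close>] by simp
  show "cls (shift_out g) \<subseteq> shift_out ` cls g"
  proof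
    fix y assume y: "y \<in> cls (shift_out g)"
    have "shift_in y \<in> cls g"
      using shift_in_mem_iff[OF cls_in_D[OF g] lev_g _ g_out _ y] \<open>fst g \<noteq> 0\<close>
        abs_fst_shift_out shift_in_out mem_cls[OF g] by simp
    moreover have "shift_out (shift_in y) = y"
      using lev_out y \<open>fst g \<noteq> 0\<close> by (intro shift_out_in) auto
    ultimately show "y \<in> shift_out ` cls g" by (metis image_eqI)
  qed
  show "shift_out ` cls g \<subseteq> cls (shift_out g)"
    using shift_out_mem_iff[OF cls_in_D[OF g_out] lev_out _ g] \<open>fst g \<noteq> 0\<close> mem_cls[OF g_out]
    by auto
qed

lemma cls_funpow_shift_out:
  assumes g: "g \<in> zp_carrier P" and "fst g \<noteq> 0"
  shows "cls ((shift_out ^^ j) g) = (shift_out ^^ j) ` cls g"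
proof (induction j)
  case (Suc j)
  let ?h = "(shift_out ^^ j) g"
  have "?h \<in> zp_carrier P" using g by (induction j) simp_all
  moreover have "fst ?h \<noteq> 0" using funpow_shift_out[of g j] \<open>fst g \<noteq> 0\<close> by (simp add: sgn_if)
  ultimately have "cls (shift_out ?h) = shift_out ` cls ?h" by (rule cls_shift_out)
  also have "\<dots> = shift_out ` (shift_out ^^ j) ` cls g" using Suc.IH by simp
  finally show ?case by (simp add: image_image)
qed simp

end

lemma inj_on_funpow_shift_out: "inj_on (shift_out ^^ j) {g. fst g \<noteq> 0}"
  by (rule inj_onI) (auto simp: funpow_shift_out sgn_if prod_eq_iff split: if_splits)

lemma zp_pow_eq_funpow_shift_out:
  assumes "m > 0" "fst g \<noteq> 0"
  shows "zp_pow P m g = (shift_out ^^ nat ((m - 1) * \<bar>fst g\<bar>)) (zp_auto P 1 m g)"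
proof -
  have "(m - 1) * \<bar>fst g\<bar> * sgn (fst g) = (m - 1) * fst g"
    by (simp add: mult.assoc abs_mult_sgn)
  then show ?thesis
    using assms by (simp add: funpow_shift_out zp_pow_def zp_auto_def algebra_simps)
qed

context schur_zp
begin

lemma cls_zp_auto_subset:
  assumes m: "m > 0" "coprime m P" and g: "g \<in> zp_carrier P"
  shows "cls (zp_auto P 1 m g) \<subseteq> zp_auto P 1 m ` cls g"
proof (cases "fst g = 0")
  case True
  have "cls (zp_pow P m g) \<subseteq> zp_pow P m ` cls g"
    using cls_zp_pow_subset[OF m(1) g] m(2) by simp
  moreover have "zp_pow P m ` cls g = zp_auto P 1 m ` cls g"
    using cls_fst_zero[OF g True] zp_auto_on_fst_zero by (intro image_cong) auto
  ultimately show ?thesis using zp_auto_on_fst_zero[OF True] by simp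
next
  case False
  let ?s = "shift_out ^^ nat ((m - 1) * \<bar>fst g\<bar>)"
  have lev: "\<forall>x\<in>cls g. \<bar>fst x\<bar> = \<bar>fst g\<bar>" using abs_fst_cls[OF g] by blast
  have g_auto: "zp_auto P 1 m g \<in> zp_carrier P" "fst (zp_auto P 1 m g) \<noteq> 0"
    using False by (simp_all add: zp_auto_def)
  have "?s ` cls (zp_auto P 1 m g) = cls (zp_pow P m g)"
    using cls_funpow_shift_out[OF g_auto] zp_pow_eq_funpow_shift_out[OF m(1) False] by simp
  also have "\<dots> \<subseteq> zp_pow P m ` cls g"
    using cls_zp_pow_subset[OF m(1) g] m(2) by simp
  also have "\<dots> = ?s ` zp_auto P 1 m ` cls g"
    using lev False zp_pow_eq_funpow_shift_out[OF m(1)] by (auto simp: image_image intro!: image_cong)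
  finally have sub: "?s ` cls (zp_auto P 1 m g) \<subseteq> ?s ` zp_auto P 1 m ` cls g" .
  have "cls (zp_auto P 1 m g) \<subseteq> {x. fst x \<noteq> 0}"
    using abs_fst_cls[OF g_auto(1)] g_auto(2) by fastforce
  moreover have "zp_auto P 1 m ` cls g \<subseteq> {x. fst x \<noteq> 0}"
    using lev False by (auto simp: zp_auto_def)
  ultimately show ?thesis
    using sub inj_on_image_mem_iff[OF inj_on_funpow_shift_out] by blast
qed

lemma cls_zp_auto_one:
  assumes u: "0 < u" "u < P" and g: "g \<in> zp_carrier P"
  shows "cls (zp_auto P 1 u g) = zp_auto P 1 u ` cls g"
proof
  have unit: "coprime w P" if "0 < w" "w < P" for w
    using that prime_imp_coprime[OF prime_P, of w] by (simp add: zdvd_not_zless coprime_commute)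
  obtain v where v: "0 < v" "v < P" "(u * v) mod P = 1"
    using prime_unit_inverse[OF prime_P u] .
  have vu: "(v * u) mod P = 1" using v(3) by (simp add: mult.commute)
  show "cls (zp_auto P 1 u g) \<subseteq> zp_auto P 1 u ` cls g"
    using cls_zp_auto_subset[OF u(1) unit[OF u] g] .
  have "cls g \<subseteq> zp_auto P 1 v ` cls (zp_auto P 1 u g)"
    using cls_zp_auto_subset[OF v(1) unit[OF v(1,2)] zp_auto_mem[OF P_pos, of 1 u g]]
    by (simp only: zp_auto_inverse[OF insertI1 v(3) g])
  then have "zp_auto P 1 u ` cls g \<subseteq> zp_auto P 1 u ` zp_auto P 1 v ` cls (zp_auto P 1 u g)"
    by (rule image_mono)
  also have "\<dots> = (\<lambda>x. x) ` cls (zp_auto P 1 u g)"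
    unfolding image_image
    using zp_auto_inverse[OF _ vu] cls_mem_carrier[OF zp_auto_mem[OF P_pos]] by (intro image_cong) auto
  finally show "zp_auto P 1 u ` cls g \<subseteq> cls (zp_auto P 1 u g)" by simp
qed

lemma cls_zp_auto:
  assumes e: "e \<in> {1, -1}" and u: "0 < u" "u < P" and g: "g \<in> zp_carrier P"
  shows "cls (zp_auto P e u g) = zp_auto P e u ` cls g"
proof (cases "e = 1")
  case False
  then have e: "e = -1" using e by simp
  have eq: "zp_auto P (-1) u x = zp_uminus P (zp_auto P 1 (P - u) x)" for x
  proof -
    have "(- (((P - u) * snd x) mod P)) mod P = (u * snd x - P * snd x) mod P"
      by (simp add: mod_minus_eq algebra_simps)
    also have "\<dots> = (u * snd x) mod P" by (simp add: mod_diff_right_eq[symmetric])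
    finally show ?thesis unfolding zp_uminus_def zp_auto_def by simp
  qed
  have "cls (zp_auto P e u g) = zp_uminus P ` cls (zp_auto P 1 (P - u) g)"
    using e eq cls_uminus[OF zp_auto_mem] by simp
  also have "\<dots> = zp_uminus P ` zp_auto P 1 (P - u) ` cls g"
    using cls_zp_auto_one[of "P - u" g] u g by simp
  finally show ?thesis using e eq by (simp add: image_image)
qed (use cls_zp_auto_one[OF u g] in simp)

text \<open>Every element \<open>(e, u)\<close> of the class of \<open>za\<close> names an automorphism \<open>z \<mapsto> z\<^sup>e, a \<mapsto> a\<^sup>u\<close>;
  these turn out to be exactly the automorphisms fixing every class.\<close>

definition auto_orbit :: "int \<times> int \<Rightarrow> (int \<times> int) set" where
  "auto_orbit g = (\<lambda>(e, u). zp_auto P e u g) ` cls (1, 1)"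

lemma one_one_mem [simp]: "(1, 1) \<in> zp_carrier P"
  using P_gt_1 by simp

lemma cls_one_one_params:
  assumes eu: "(e, u) \<in> cls (1, 1)"
  shows "e \<in> {1, -1}" "0 < u" "u < P"
proof -
  show "e \<in> {1, -1}" using abs_fst_cls[OF one_one_mem eu] by auto
  have "u \<noteq> 0"
  proof
    assume "u = 0"
    then have "snd (1::int, 1::int) = 0"
      using cls_z_subgroup[of "(e, u)" "(1, 1)"] cls_sym[OF one_one_mem eu]
        cls_mem_carrier[OF one_one_mem eu] by simp
    then show False by simp
  qed
  then show "0 < u" "u < P" using cls_mem_carrier[OF one_one_mem eu] by auto
qed

lemma auto_orbit_zp_auto: "auto_orbit (zp_auto P e u g) = zp_auto P e u ` auto_orbit g"
  unfolding auto_orbit_def image_image by (rule image_cong) (auto simp: zp_auto_commute[of P _ _ e u])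

lemma auto_orbit_uminus: "auto_orbit (zp_uminus P g) = zp_uminus P ` auto_orbit g"
  using auto_orbit_zp_auto[of "-1" "-1" g] by (simp add: zp_uminus_eq_zp_auto[abs_def])

lemma auto_orbit_shift_out: "auto_orbit (shift_out g) = shift_out ` auto_orbit g"
  unfolding auto_orbit_def image_image
  by (rule image_cong) (auto simp: zp_auto_shift_out dest: cls_one_one_params(1))

lemma cls_one_one: "cls (1, 1) = auto_orbit (1, 1)"
proof -
  have "(\<lambda>(e, u). zp_auto P e u (1, 1)) ` cls (1, 1) = (\<lambda>x. x) ` cls (1, 1)"
  proof (rule image_cong)
    fix x assume "x \<in> cls (1, 1)"
    then show "(case x of (e, u) \<Rightarrow> zp_auto P e u (1, 1)) = x"
      using cls_one_one_params[of "fst x" "snd x"] by (cases x) (simp add: zp_auto_def)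
  qed simp
  then show ?thesis unfolding auto_orbit_def by simp
qed

lemma mem_auto_orbitI: "(e, u) \<in> cls (1, 1) \<Longrightarrow> zp_auto P e u g \<in> auto_orbit g"
  unfolding auto_orbit_def by force

lemma mem_auto_orbitE:
  assumes "w \<in> auto_orbit g"
  obtains e u where "(e, u) \<in> cls (1, 1)" "w = zp_auto P e u g"
  using assms unfolding auto_orbit_def by auto

text \<open>Counting neighbours in the class of \<open>za\<close> shows that for every \<open>a\<^sup>k\<close> in the class of
  \<open>a\<close> some \<open>z\<^sup>\<plusminus>\<^sup>1a\<^sup>k\<close> lies in the class of \<open>za\<close>.\<close>

lemma cls_zero_one: "cls (0, 1) = auto_orbit (0, 1)"
proof
  have g01: "(0, 1) \<in> zp_carrier P" using P_gt_1 by simp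
  show "cls (0, 1) \<subseteq> auto_orbit (0, 1)"
  proof
    fix w assume w: "w \<in> cls (0, 1)"
    have "fst w = 0" using cls_fst_zero[OF g01 _ w] by simp
    then obtain k where wk: "w = (0, k)" by (cases w) auto
    have k: "0 \<le> k" "k < P" using cls_mem_carrier[OF g01 w] wk by auto
    have "nbr_count (cls (1, 1)) w = nbr_count (cls (1, 1)) (0, 1)"
      using nbr_count_cls[OF cls_in_D[OF one_one_mem] g01 w] .
    also have "\<dots> \<noteq> 0" using nbr_count_eq[OF g01] mem_cls[OF one_one_mem] by simp
    finally obtain e where "(e, k) \<in> cls (1, 1)"
      using nbr_count_eq[OF cls_mem_carrier[OF g01 w]] wk by (auto split: if_splits)
    moreover have "zp_auto P e k (0, 1) = w" using wk k by (simp add: zp_auto_def)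
    ultimately show "w \<in> auto_orbit (0, 1)" using mem_auto_orbitI by metis
  qed
  show "auto_orbit (0, 1) \<subseteq> cls (0, 1)"
  proof
    fix w assume "w \<in> auto_orbit (0, 1)"
    then obtain e u where eu: "(e, u) \<in> cls (1, 1)" "w = zp_auto P e u (0, 1)" by (rule mem_auto_orbitE)
    have "(0, u) \<in> cls (0, 1)" using cls_projections(2)[OF one_one_mem eu(1)] by simp
    moreover have "w = (0, u)" using eu cls_one_one_params[OF eu(1)] by (simp add: zp_auto_def)
    ultimately show "w \<in> cls (0, 1)" by simp
  qed
qed

lemma cls_one_zero: "cls (1, 0) = auto_orbit (1, 0)"
proof
  have g10: "(1, 0) \<in> zp_carrier P" by simp
  show "auto_orbit (1, 0) \<subseteq> cls (1, 0)"
  proof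
    fix w assume "w \<in> auto_orbit (1, 0)"
    then obtain e u where eu: "(e, u) \<in> cls (1, 1)" "w = zp_auto P e u (1, 0)" by (rule mem_auto_orbitE)
    then show "w \<in> cls (1, 0)"
      using cls_projections(1)[OF one_one_mem eu(1)] by (simp add: zp_auto_def)
  qed
  show "cls (1, 0) \<subseteq> auto_orbit (1, 0)"
  proof
    fix w assume w: "w \<in> cls (1, 0)"
    have "(1, 0) \<in> auto_orbit (1, 0)"
      using mem_auto_orbitI[OF mem_cls[OF one_one_mem], of "(1, 0)"] by (simp add: zp_auto_def)
    moreover have "(-1, 0) \<in> auto_orbit (1, 0)" if w_neg: "w = (-1, 0)"
    proof -
      \<comment> \<open>\<open>z = za \<^bold>\<cdot> a\<^sup>-\<^sup>1\<close>, so \<open>z\<^sup>-\<^sup>1\<close> is also a product of an element of \<open>[za]\<close> and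
        one of \<open>[a\<^sup>-\<^sup>1]\<close>; the factor from \<open>[za]\<close> must then be some \<open>z\<^sup>-\<^sup>1a\<^sup>u\<close>.\<close>
      let ?X = "cls (1, 1)" and ?Y = "cls (0, P - 1)"
      have gY: "(0, P - 1) \<in> zp_carrier P" by simp
      have "zp_minus P (1, 0) (1, 1) = (0, P - 1)"
        unfolding zp_minus_def using P_gt_1 by (simp add: zmod_minus1)
      then have "(1, 1) \<in> {c\<in>?X. zp_minus P (1, 0) c \<in> ?Y}"
        using mem_cls[OF one_one_mem] mem_cls[OF gY] by simp
      then have "prod_coeff P ?X ?Y (1, 0) \<noteq> 0"
        unfolding prod_coeff_def using finite_cls[OF one_one_mem] by (auto simp: card_eq_0_iff)
      then have "prod_coeff P ?X ?Y (-1, 0) \<noteq> 0"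
        using prod_coeff_cls[OF cls_in_D[OF one_one_mem] cls_in_D[OF gY] g10] w w_neg by simp
      then obtain c where c: "c \<in> ?X" "zp_minus P (-1, 0) c \<in> ?Y"
        unfolding prod_coeff_def by (auto simp: card_eq_0_iff)
      have "fst (zp_minus P (-1, 0) c) = 0" using cls_fst_zero[OF gY _ c(2)] by simp
      then have "zp_auto P (fst c) (snd c) (1, 0) = (-1, 0)" by (simp add: zp_minus_def zp_auto_def)
      then show ?thesis using mem_auto_orbitI[of "fst c" "snd c" "(1, 0)"] c(1) by simp
    qed
    ultimately show "w \<in> auto_orbit (1, 0)" using w cls_one_zero_subset by blast
  qed
qed

lemma cls_eq_auto_orbit_base:
  assumes g: "g \<in> zp_carrier P" and base: "fst g \<in> {0, 1}"
  shows "cls g = auto_orbit g"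
proof -
  obtain n k where g_nk: "g = (n, k)" and k: "0 \<le> k" "k < P" using g by (cases g) auto
  show ?thesis
  proof (cases "k = 0")
    case True
    have "auto_orbit (0, 0) = {(0, 0)}"
      using mem_cls[OF one_one_mem] unfolding auto_orbit_def by (auto simp: zp_auto_def)
    then show ?thesis
      using True base g_nk cls_zero cls_one_zero by auto
  next
    case False
    then have "0 < k" using k by simp
    moreover have "g = zp_auto P 1 k (n, 1)" using g_nk k by (simp add: zp_auto_def)
    moreover have "cls (n, 1) = auto_orbit (n, 1)" using base g_nk cls_zero_one cls_one_one by auto
    ultimately show ?thesis
      using cls_zp_auto[of 1 k "(n, 1)"] auto_orbit_zp_auto[of 1 k "(n, 1)"] k P_gt_1 by simp
  qed
qed

text \<open>Both sides commute with \<open>g \<mapsto> g\<^sup>-\<^sup>1\<close> and with moving one step away from \<open>\<langle>a\<rangle>\<close>, which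
  reduces everything to first coordinate \<open>0\<close> or \<open>1\<close>.\<close>

lemma cls_eq_auto_orbit:
  assumes "g \<in> zp_carrier P"
  shows "cls g = auto_orbit g"
proof -
  have level: "cls g = auto_orbit g" if "g \<in> zp_carrier P" "\<bar>fst g\<bar> = int n + 1" for n g
    using that
  proof (induction n arbitrary: g)
    case 0
    show ?case
    proof (cases "fst g = 1")
      case False
      let ?h = "zp_uminus P g"
      have "fst ?h = 1" using False 0 by (auto simp: zp_uminus_def)
      then have "cls ?h = auto_orbit ?h" by (intro cls_eq_auto_orbit_base) simp_all
      then have "cls (zp_uminus P ?h) = auto_orbit (zp_uminus P ?h)"
        using cls_uminus[of ?h] auto_orbit_uminus[of ?h] by simp
      then show ?thesis using zp_uminus_uminus[OF 0(1)] by simp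
    qed (use cls_eq_auto_orbit_base 0 in simp)
  next
    case (Suc n)
    have "fst g \<noteq> 0" using Suc.prems(2) by auto
    then have "\<bar>fst (shift_in g)\<bar> = int n + 1" using abs_fst_shift_in[of g] Suc.prems(2) by simp
    then have "fst (shift_in g) \<noteq> 0" "\<bar>fst (shift_in g)\<bar> = int n + 1" by auto
    then have "cls (shift_out (shift_in g)) = auto_orbit (shift_out (shift_in g))"
      using Suc.IH[of "shift_in g"] Suc.prems(1) cls_shift_out[of "shift_in g"]
        auto_orbit_shift_out[of "shift_in g"] by simp
    moreover have "shift_out (shift_in g) = g" using Suc.prems(2) by (simp add: shift_out_in)
    ultimately show ?case by simp
  qed
  show ?thesis
  proof (cases "fst g = 0")
    case False
    then show ?thesis using level[of g "nat (\<bar>fst g\<bar> - 1)"] assms by simp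
  qed (use cls_eq_auto_orbit_base assms in simp)
qed

end

section \<open>The group \<open>ZxZp p\<close> and its automorphisms\<close>

lemma group_ZxZp: "group (ZxZp p)"
  unfolding ZxZp_def by (intro DirProd_group group_integer_group group_integer_mod_group)

lemma carrier_ZxZp: "p > 0 \<Longrightarrow> carrier (ZxZp p) = zp_carrier (int p)"
  unfolding ZxZp_def zp_carrier_def by (simp add: carrier_integer_mod_group)

lemma mult_ZxZp: "x \<otimes>\<^bsub>ZxZp p\<^esub> y = (fst x + fst y, (snd x + snd y) mod int p)"
  unfolding ZxZp_def by (simp add: mult_DirProd')

lemma one_ZxZp: "\<one>\<^bsub>ZxZp p\<^esub> = (0, 0)"
  unfolding ZxZp_def by simp

lemma inv_ZxZp:
  assumes "p > 0" "x \<in> carrier (ZxZp p)"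
  shows "inv\<^bsub>ZxZp p\<^esub> x = zp_uminus (int p) x"
proof -
  have "snd x \<in> carrier (integer_mod_group p)" using assms unfolding ZxZp_def by auto
  moreover have "inv\<^bsub>ZxZp p\<^esub> x = (inv\<^bsub>integer_group\<^esub> fst x, inv\<^bsub>integer_mod_group p\<^esub> snd x)"
    using assms unfolding ZxZp_def by (cases x) (simp add: inv_DirProd)
  ultimately show ?thesis by (simp add: zp_uminus_def)
qed

lemma int_pow_ZxZp:
  assumes "p > 0" "x \<in> carrier (ZxZp p)"
  shows "x [^]\<^bsub>ZxZp p\<^esub> (k::int) = zp_pow (int p) k x"
proof -
  have fst_hom: "fst \<in> hom (ZxZp p) integer_group"
    by (rule homI) (simp_all add: mult_ZxZp integer_group_def)
  have snd_hom: "snd \<in> hom (ZxZp p) (integer_mod_group p)"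
    using assms(1) by (intro homI) (auto simp: mult_ZxZp carrier_ZxZp carrier_integer_mod_group
      mem_zp_carrier_iff integer_mod_group_def)
  have "fst (x [^]\<^bsub>ZxZp p\<^esub> k) = k * fst x"
    using hom_int_pow[OF fst_hom assms(2) group_ZxZp group_integer_group] by simp
  moreover have "snd (x [^]\<^bsub>ZxZp p\<^esub> k) = (k * snd x) mod int p"
    using hom_int_pow[OF snd_hom assms(2) group_ZxZp group_integer_mod_group]
    by (simp add: int_pow_integer_mod_group)
  ultimately show ?thesis by (simp add: zp_pow_def prod_eq_iff)
qed

lemma ZxZp_eq_generator_powers:
  assumes "p > 1" "x \<in> carrier (ZxZp p)"
  shows "x = ((1, 0) [^]\<^bsub>ZxZp p\<^esub> fst x) \<otimes>\<^bsub>ZxZp p\<^esub> ((0, 1) [^]\<^bsub>ZxZp p\<^esub> snd x)"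
  using assms by (simp add: int_pow_ZxZp carrier_ZxZp mult_ZxZp zp_pow_def mem_zp_carrier_iff
      prod_eq_iff)

lemma hom_ZxZp_eqI:
  assumes p: "p > 1" and hom: "\<sigma> \<in> hom (ZxZp p) (ZxZp p)" "\<tau> \<in> hom (ZxZp p) (ZxZp p)"
    and gen: "\<sigma> (1, 0) = \<tau> (1, 0)" "\<sigma> (0, 1) = \<tau> (0, 1)" and x: "x \<in> carrier (ZxZp p)"
  shows "\<sigma> x = \<tau> x"
proof -
  let ?G = "ZxZp p"
  have gens: "(1, 0) \<in> carrier ?G" "(0, 1) \<in> carrier ?G" using p by (simp_all add: carrier_ZxZp)
  have "\<phi> x = (\<phi> (1, 0) [^]\<^bsub>?G\<^esub> fst x) \<otimes>\<^bsub>?G\<^esub> (\<phi> (0, 1) [^]\<^bsub>?G\<^esub> snd x)"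
    if "\<phi> \<in> hom ?G ?G" for \<phi>
  proof -
    interpret group_hom ?G ?G \<phi> using that group_ZxZp by (simp add: group_hom_def group_hom_axioms_def)
    have "\<phi> x = \<phi> (((1, 0) [^]\<^bsub>?G\<^esub> fst x) \<otimes>\<^bsub>?G\<^esub> ((0, 1) [^]\<^bsub>?G\<^esub> snd x))"
      using ZxZp_eq_generator_powers[OF p x] by simp
    then show ?thesis using gens by (simp add: hom_int_pow)
  qed
  then show ?thesis using hom gen by metis
qed

lemma restrict_mem_auto_ZxZp:
  assumes p: "p > 0" and bij: "bij_betw f (zp_carrier (int p)) (zp_carrier (int p))"
    and hom: "\<And>x y. x \<in> zp_carrier (int p) \<Longrightarrow> y \<in> zp_carrier (int p) \<Longrightarrow>
      f (x \<otimes>\<^bsub>ZxZp p\<^esub> y) = f x \<otimes>\<^bsub>ZxZp p\<^esub> f y"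
  shows "restrict f (zp_carrier (int p)) \<in> auto (ZxZp p)"
proof -
  have "x \<otimes>\<^bsub>ZxZp p\<^esub> y \<in> zp_carrier (int p)"
    if "x \<in> zp_carrier (int p)" "y \<in> zp_carrier (int p)" for x y
    using p by (simp add: mult_ZxZp mem_zp_carrier_iff)
  then have "restrict f (zp_carrier (int p)) \<in> hom (ZxZp p) (ZxZp p)"
    using bij hom p by (intro homI) (auto simp: carrier_ZxZp bij_betw_def)
  moreover have "restrict f (zp_carrier (int p)) \<in> Bij (zp_carrier (int p))"
    using bij unfolding Bij_def by (simp add: bij_betw_restrict_eq)
  ultimately show ?thesis unfolding auto_def using p by (simp add: carrier_ZxZp)
qed

lemma finite_class_stabilizer_ZxZp:
  assumes p: "p > 1" and part: "partition_on (carrier (ZxZp p)) \<D>"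
    and fin: "\<And>C. C \<in> \<D> \<Longrightarrow> finite C"
  shows "finite (class_stabilizer (ZxZp p) \<D>)"
proof -
  let ?G = "ZxZp p"
  have gens: "(1, 0) \<in> carrier ?G" "(0, 1) \<in> carrier ?G" using p by (simp_all add: carrier_ZxZp)
  obtain C1 C2 where C: "C1 \<in> \<D>" "(1, 0) \<in> C1" "C2 \<in> \<D>" "(0, 1) \<in> C2"
    using part gens unfolding partition_on_def by blast
  let ?\<phi> = "\<lambda>\<sigma>. (\<sigma> (1, 0), \<sigma> (0, 1))"
  have "?\<phi> ` class_stabilizer ?G \<D> \<subseteq> C1 \<times> C2"
  proof (rule image_subsetI)
    fix \<sigma> assume "\<sigma> \<in> class_stabilizer ?G \<D>"
    then have "\<sigma> ` C1 \<subseteq> C1" "\<sigma> ` C2 \<subseteq> C2" using C unfolding class_stabilizer_def by auto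
    then show "?\<phi> \<sigma> \<in> C1 \<times> C2" using C by auto
  qed
  moreover have "finite (C1 \<times> C2)" using C fin by simp
  ultimately have "finite (?\<phi> ` class_stabilizer ?G \<D>)" by (rule finite_subset)
  moreover have "inj_on ?\<phi> (class_stabilizer ?G \<D>)"
  proof (rule inj_onI)
    fix \<sigma> \<tau> assume \<sigma>\<tau>: "\<sigma> \<in> class_stabilizer ?G \<D>" "\<tau> \<in> class_stabilizer ?G \<D>" "?\<phi> \<sigma> = ?\<phi> \<tau>"
    then have "\<sigma> \<in> hom ?G ?G \<inter> extensional (carrier ?G)" "\<tau> \<in> hom ?G ?G \<inter> extensional (carrier ?G)"
      unfolding class_stabilizer_def auto_def Bij_def by auto
    then show "\<sigma> = \<tau>"
      using hom_ZxZp_eqI[OF p, of \<sigma> \<tau>] \<sigma>\<tau>(3) by (intro extensionalityI[of _ "carrier ?G"]) auto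
  qed
  ultimately show ?thesis by (rule finite_imageD)
qed

lemma class_prod_ZxZp:
  assumes p: "p > 0" and C: "C \<subseteq> zp_carrier (int p)" "finite C"
    and E: "E \<subseteq> zp_carrier (int p)" "finite E" and g: "g \<in> zp_carrier (int p)"
  shows "(class_prod (ZxZp p) C E g :: 'f::field) = of_nat (prod_coeff (int p) C E g)"
proof -
  have eq: "c \<otimes>\<^bsub>ZxZp p\<^esub> d = g \<longleftrightarrow> d = zp_minus (int p) g c" if "c \<in> C" "d \<in> E" for c d
  proof -
    have "(snd c + snd d) mod int p = snd g \<longleftrightarrow> (snd c + snd d) mod int p = snd g mod int p"
      using g by (simp add: mem_zp_carrier_iff)
    also have "\<dots> \<longleftrightarrow> snd d mod int p = (snd g - snd c) mod int p"
      by (simp add: mod_eq_dvd_iff algebra_simps)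
    also have "\<dots> \<longleftrightarrow> snd d = (snd g - snd c) mod int p"
      using that E by (auto simp: mem_zp_carrier_iff)
    finally show ?thesis unfolding mult_ZxZp zp_minus_def by (auto simp: prod_eq_iff)
  qed
  then have "(\<Sum>d\<in>E. if c \<otimes>\<^bsub>ZxZp p\<^esub> d = g then 1 else 0) = (if zp_minus (int p) g c \<in> E then 1 else (0::'f))"
    if c: "c \<in> C" for c
  proof -
    have "(\<Sum>d\<in>E. if c \<otimes>\<^bsub>ZxZp p\<^esub> d = g then 1 else 0)
        = (\<Sum>d\<in>E. if d = zp_minus (int p) g c then 1 else (0::'f))"
      using eq[OF c] by (intro sum.cong) auto
    then show ?thesis using E(2) by simp
  qed
  then have "class_prod (ZxZp p) C E g = (\<Sum>c\<in>C. if zp_minus (int p) g c \<in> E then 1 else (0::'f))"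
    unfolding class_prod_def by simp
  also have "\<dots> = of_nat (prod_coeff (int p) C E g)"
    unfolding prod_coeff_def using C(2) by (simp add: sum.If_cases Int_def)
  finally show ?thesis .
qed

lemma schur_partition_ZxZp_uminus:
  assumes "p > 0" "schur_partition TYPE('f::field) (ZxZp p) \<D>" "C \<in> \<D>"
  shows "zp_uminus (int p) ` C \<in> \<D>"
proof -
  have "C \<subseteq> carrier (ZxZp p)" using assms(2,3) unfolding schur_partition_def partition_on_def by auto
  then have "(\<lambda>g. inv\<^bsub>ZxZp p\<^esub> g) ` C = zp_uminus (int p) ` C"
    using inv_ZxZp[OF assms(1)] by (intro image_cong) auto
  then show ?thesis using assms(2,3) unfolding schur_partition_def by metis
qed

lemma schur_partition_ZxZp_prod_coeff:
  assumes p: "p > 0" and S: "schur_partition TYPE('f::field_char_0) (ZxZp p) \<D>"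
    and CEW: "C \<in> \<D>" "E \<in> \<D>" "W \<in> \<D>" and g: "g \<in> W" "g' \<in> W"
  shows "prod_coeff (int p) C E g = prod_coeff (int p) C E g'"
proof -
  have part: "partition_on (zp_carrier (int p)) \<D>" and fin: "\<And>C. C \<in> \<D> \<Longrightarrow> finite C"
    and span: "(class_prod (ZxZp p) C E :: _ \<Rightarrow> 'f) \<in> schur_span TYPE('f) \<D>"
    using S CEW p unfolding schur_partition_def by (auto simp: carrier_ZxZp)
  have sub: "Y \<subseteq> zp_carrier (int p)" if "Y \<in> \<D>" for Y
    using part that unfolding partition_on_def by auto
  note coeff = class_prod_ZxZp[OF p sub[OF CEW(1)] fin[OF CEW(1)] sub[OF CEW(2)] fin[OF CEW(2)]]
  have g_car: "g \<in> zp_carrier (int p)" "g' \<in> zp_carrier (int p)" using sub[OF CEW(3)] g by auto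
  have "(of_nat (prod_coeff (int p) C E g) :: 'f) = class_prod (ZxZp p) C E g"
    by (rule coeff[OF g_car(1), symmetric])
  also have "\<dots> = class_prod (ZxZp p) C E g'"
    by (rule schur_span_const_on_class[OF part span CEW(3) g])
  also have "\<dots> = of_nat (prod_coeff (int p) C E g')"
    by (rule coeff[OF g_car(2)])
  finally show ?thesis by simp
qed

lemma generate_ZxZp_line:
  assumes "p > 0" "0 \<le> j" "j < int p"
  shows "generate (ZxZp p) {(1, j)} = zp_line (int p) j"
proof -
  have "(1, j) \<in> carrier (ZxZp p)" using assms by (simp add: carrier_ZxZp)
  then have "generate (ZxZp p) {(1, j)} = range (\<lambda>k. zp_pow (int p) k (1, j))"
    using group.generate_pow[OF group_ZxZp] int_pow_ZxZp[OF assms(1)] by auto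
  also have "\<dots> = zp_line (int p) j"
  proof (intro equalityI subsetI)
    fix x assume "x \<in> zp_line (int p) j"
    then have "x = zp_pow (int p) (fst x) (1, j)" unfolding zp_line_def zp_pow_def by (simp add: prod_eq_iff)
    then show "x \<in> range (\<lambda>k. zp_pow (int p) k (1, j))" by blast
  qed (auto simp: zp_line_def zp_pow_def)
  finally show ?thesis .
qed

lemma generate_ZxZp_a_pow_z:
  assumes "p > 1"
  shows "generate (ZxZp p) {((0, 1) [^]\<^bsub>ZxZp p\<^esub> i) \<otimes>\<^bsub>ZxZp p\<^esub> (1, 0)} = zp_line (int p) (i mod int p)"
proof -
  have "((0, 1) [^]\<^bsub>ZxZp p\<^esub> i) \<otimes>\<^bsub>ZxZp p\<^esub> (1, 0) = (1, i mod int p)"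
    using assms by (simp add: int_pow_ZxZp carrier_ZxZp zp_pow_def mult_ZxZp)
  then show ?thesis using generate_ZxZp_line[of p "i mod int p"] assms by simp
qed

section \<open>Moving \<open>\<langle>a\<^sup>iz\<rangle>\<close> to \<open>\<langle>z\<rangle>\<close>\<close>

text \<open>The shear \<open>(x, y) \<mapsto> (x, y - jx)\<close> is the automorphism of \<open>\<int> \<times> \<int>\<^sub>P\<close> sending \<open>a\<^sup>jz\<close> to \<open>z\<close>.\<close>

definition zp_shear :: "int \<Rightarrow> int \<Rightarrow> int \<times> int \<Rightarrow> int \<times> int" where
  "zp_shear P j x = (fst x, (snd x - fst x * j) mod P)"

lemma zp_shear_mem [simp]: "P > 0 \<Longrightarrow> zp_shear P j x \<in> zp_carrier P"
  unfolding zp_shear_def by (simp add: mem_zp_carrier_iff)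

lemma zp_shear_inverse: "x \<in> zp_carrier P \<Longrightarrow> zp_shear P (- j) (zp_shear P j x) = x"
  unfolding zp_shear_def by (cases x) (simp add: mod_simps mem_zp_carrier_iff)

lemma bij_betw_zp_shear: "P > 0 \<Longrightarrow> bij_betw (zp_shear P j) (zp_carrier P) (zp_carrier P)"
  using zp_shear_inverse[of _ P j] zp_shear_inverse[of _ P "- j"]
  by (intro bij_betw_byWitness[where f' = "zp_shear P (- j)"]) auto

lemma zp_shear_minus: "zp_minus P (zp_shear P j g) (zp_shear P j c) = zp_shear P j (zp_minus P g c)"
proof -
  have "((snd g - fst g * j) mod P - (snd c - fst c * j) mod P) mod P
      = ((snd g - snd c) - (fst g - fst c) * j) mod P"
    by (simp add: mod_diff_eq algebra_simps)
  also have "\<dots> = ((snd g - snd c) mod P - (fst g - fst c) * j) mod P"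
    by (simp add: mod_diff_left_eq)
  finally show ?thesis unfolding zp_minus_def zp_shear_def by simp
qed

lemma zp_shear_uminus: "zp_uminus P (zp_shear P j x) = zp_shear P j (zp_uminus P x)"
  unfolding zp_shear_def zp_uminus_def by (simp add: mod_simps algebra_simps)

lemma zp_shear_mult:
  "zp_shear (int p) j (x \<otimes>\<^bsub>ZxZp p\<^esub> y) = zp_shear (int p) j x \<otimes>\<^bsub>ZxZp p\<^esub> zp_shear (int p) j y"
proof -
  have "((snd x + snd y) mod int p - (fst x + fst y) * j) mod int p
      = ((snd x - fst x * j) + (snd y - fst y * j)) mod int p"
    by (simp add: mod_diff_left_eq algebra_simps)
  also have "\<dots> = ((snd x - fst x * j) mod int p + (snd y - fst y * j) mod int p) mod int p"
    by (simp add: mod_add_eq)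
  finally show ?thesis unfolding zp_shear_def mult_ZxZp by simp
qed

lemma zp_auto_mult:
  "zp_auto (int p) e u (x \<otimes>\<^bsub>ZxZp p\<^esub> y) = zp_auto (int p) e u x \<otimes>\<^bsub>ZxZp p\<^esub> zp_auto (int p) e u y"
proof -
  have "(u * ((snd x + snd y) mod int p)) mod int p = (u * snd x + u * snd y) mod int p"
    by (simp add: mod_mult_right_eq algebra_simps)
  also have "\<dots> = ((u * snd x) mod int p + (u * snd y) mod int p) mod int p"
    by (simp add: mod_add_eq)
  finally show ?thesis unfolding zp_auto_def mult_ZxZp by (simp add: algebra_simps)
qed

lemma zp_shear_mem_line_iff: "x \<in> zp_carrier P \<Longrightarrow> snd (zp_shear P j x) = 0 \<longleftrightarrow> x \<in> zp_line P j"
  unfolding zp_shear_def zp_line_def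
  by (simp add: mod_eq_0_iff_dvd mod_eq_dvd_iff[symmetric] mem_zp_carrier_iff)

lemma prod_coeff_zp_shear:
  assumes "P > 0" "C \<subseteq> zp_carrier P" "E \<subseteq> zp_carrier P"
  shows "prod_coeff P (zp_shear P j ` C) (zp_shear P j ` E) (zp_shear P j g) = prod_coeff P C E g"
proof -
  have inj: "inj_on (zp_shear P j) (zp_carrier P)"
    using bij_betw_zp_shear[OF assms(1)] by (rule bij_betw_imp_inj_on)
  have "zp_shear P j c' \<in> zp_shear P j ` E \<longleftrightarrow> c' \<in> E" if "c' \<in> zp_carrier P" for c'
    using inj_on_image_mem_iff[OF inj that assms(3)] .
  then have "zp_minus P (zp_shear P j g) (zp_shear P j c) \<in> zp_shear P j ` E \<longleftrightarrow> zp_minus P g c \<in> E"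
    for c
    using assms(1) by (simp add: zp_shear_minus)
  then have "{c\<in>zp_shear P j ` C. zp_minus P (zp_shear P j g) c \<in> zp_shear P j ` E}
      = zp_shear P j ` {c\<in>C. zp_minus P g c \<in> E}"
    by (auto simp del: zp_minus_mem) (metis (mono_tags, lifting) image_eqI mem_Collect_eq)
  moreover have "inj_on (zp_shear P j) {c\<in>C. zp_minus P g c \<in> E}"
    using inj assms(2) by (blast intro: inj_on_subset)
  ultimately show ?thesis unfolding prod_coeff_def by (simp add: card_image)
qed

lemma partition_on_zp_shear_image:
  assumes "P > 0" "partition_on (zp_carrier P) \<D>"
  shows "partition_on (zp_carrier P) ((`) (zp_shear P j) ` \<D>)"
proof -
  have bij: "bij_betw (zp_shear P j) (zp_carrier P) (zp_carrier P)" by (rule bij_betw_zp_shear[OF assms(1)])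
  have "{} \<notin> (`) (zp_shear P j) ` \<D>" using partition_onD3[OF assms(2)] by auto
  then show ?thesis
    using partition_on_inj_image[OF assms(2) bij_betw_imp_inj_on[OF bij]] bij_betw_imp_surj_on[OF bij]
    by simp
qed

lemma prod_coeff_const_zp_shear_image:
  assumes P: "P > 0" and sub: "\<And>C. C \<in> \<D> \<Longrightarrow> C \<subseteq> zp_carrier P"
    and coeff: "\<And>C E W g g'. C \<in> \<D> \<Longrightarrow> E \<in> \<D> \<Longrightarrow> W \<in> \<D> \<Longrightarrow> g \<in> W \<Longrightarrow> g' \<in> W
                 \<Longrightarrow> prod_coeff P C E g = prod_coeff P C E g'"
    and CEW: "C \<in> (`) (zp_shear P j) ` \<D>" "E \<in> (`) (zp_shear P j) ` \<D>" "W \<in> (`) (zp_shear P j) ` \<D>"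
    and h: "h \<in> W" "h' \<in> W"
  shows "prod_coeff P C E h = prod_coeff P C E h'"
proof -
  let ?s = "zp_shear P j"
  obtain C0 E0 W0 where D: "C0 \<in> \<D>" "E0 \<in> \<D>" "W0 \<in> \<D>" "C = ?s ` C0" "E = ?s ` E0" "W = ?s ` W0"
    using CEW by blast
  obtain h0 h0' where h0: "h0 \<in> W0" "h = ?s h0" "h0' \<in> W0" "h' = ?s h0'"
    using h D(6) by blast
  have "prod_coeff P C E h = prod_coeff P C0 E0 h0"
    unfolding D(4,5) h0(2) by (rule prod_coeff_zp_shear[OF P sub sub]) (use D in simp_all)
  also have "\<dots> = prod_coeff P C0 E0 h0'" using coeff[OF D(1-3) h0(1,3)] .
  also have "\<dots> = prod_coeff P C E h'"
    unfolding D(4,5) h0(4) by (rule prod_coeff_zp_shear[OF P sub sub, symmetric]) (use D in simp_all)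
  finally show ?thesis .
qed

lemma schur_zp_shear_image:
  fixes P j :: int and \<D> :: "(int \<times> int) set set"
  assumes prime: "Factorial_Ring.prime P"
    and part: "partition_on (zp_carrier P) \<D>" and fin: "\<And>C. C \<in> \<D> \<Longrightarrow> finite C"
    and zero: "{(0, 0)} \<in> \<D>" and uminus: "\<And>C. C \<in> \<D> \<Longrightarrow> zp_uminus P ` C \<in> \<D>"
    and coeff: "\<And>C E W g g'. C \<in> \<D> \<Longrightarrow> E \<in> \<D> \<Longrightarrow> W \<in> \<D> \<Longrightarrow> g \<in> W \<Longrightarrow> g' \<in> W
                 \<Longrightarrow> prod_coeff P C E g = prod_coeff P C E g'"
    and line: "\<And>C x y. C \<in> \<D> \<Longrightarrow> x \<in> C \<Longrightarrow> y \<in> C \<Longrightarrow> x \<in> zp_line P j \<Longrightarrow> y \<in> zp_line P j"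
  shows "schur_zp P ((`) (zp_shear P j) ` \<D>)"
proof
  let ?s = "zp_shear P j"
  have P: "P > 0" using prime_gt_1_int[OF prime] by simp
  have sub: "C \<subseteq> zp_carrier P" if "C \<in> \<D>" for C using part that unfolding partition_on_def by auto
  show "Factorial_Ring.prime P" by fact
  show "partition_on (zp_carrier P) ((`) ?s ` \<D>)" by (rule partition_on_zp_shear_image[OF P part])
  show "finite C" if "C \<in> (`) ?s ` \<D>" for C using that fin by auto
  show "{(0, 0)} \<in> (`) ?s ` \<D>"
  proof -
    have "?s ` {(0, 0)} = {(0, 0)}" by (simp add: zp_shear_def)
    then show ?thesis using zero by (metis image_eqI)
  qed
  show "zp_uminus P ` C \<in> (`) ?s ` \<D>" if C: "C \<in> (`) ?s ` \<D>" for C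
  proof -
    obtain C0 where C0: "C0 \<in> \<D>" "C = ?s ` C0" using C by blast
    then have "zp_uminus P ` C = ?s ` (zp_uminus P ` C0)" by (simp add: image_image zp_shear_uminus)
    then show ?thesis using uminus[OF C0(1)] by blast
  qed
  show "prod_coeff P C E h = prod_coeff P C E h'"
    if "C \<in> (`) ?s ` \<D>" "E \<in> (`) ?s ` \<D>" "W \<in> (`) ?s ` \<D>" "h \<in> W" "h' \<in> W"
    for C E W h h'
    using prod_coeff_const_zp_shear_image[OF P sub coeff that] .
  show "snd h' = 0" if prems: "C \<in> (`) ?s ` \<D>" "h \<in> C" "h' \<in> C" "snd h = 0" for C h h'
  proof -
    obtain C0 where C0: "C0 \<in> \<D>" "C = ?s ` C0" using prems(1) by blast
    obtain x y where xy: "x \<in> C0" "h = ?s x" "y \<in> C0" "h' = ?s y" using prems(2,3) C0(2) by blast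
    have "x \<in> zp_line P j" using zp_shear_mem_line_iff[of x] xy(1,2) prems(4) sub[OF C0(1)] by blast
    then have "y \<in> zp_line P j" using line[OF C0(1) xy(1,3)] by simp
    then show ?thesis using zp_shear_mem_line_iff[of y] xy(3,4) sub[OF C0(1)] by blast
  qed
qed

lemma zp_shear_conj_mem_auto:
  assumes p: "p > 0" and e: "e \<in> {1, -1}" and uv: "(u * v) mod int p = 1"
  shows "restrict (zp_shear (int p) (- j) \<circ> zp_auto (int p) e u \<circ> zp_shear (int p) j) (zp_carrier (int p))
    \<in> auto (ZxZp p)"
proof (rule restrict_mem_auto_ZxZp[OF p])
  have "(v * u) mod int p = 1" using uv by (simp add: mult.commute)
  then have "bij_betw (zp_auto (int p) e u) (zp_carrier (int p)) (zp_carrier (int p))"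
    using zp_auto_inverse[OF e uv] zp_auto_inverse[OF e] p
    by (intro bij_betw_byWitness[where f' = "zp_auto (int p) e v"]) auto
  moreover have "int p > 0" using p by simp
  ultimately have "bij_betw (zp_shear (int p) (- j) \<circ> (zp_auto (int p) e u \<circ> zp_shear (int p) j))
      (zp_carrier (int p)) (zp_carrier (int p))"
    using bij_betw_zp_shear by (blast intro: bij_betw_trans)
  then show "bij_betw (zp_shear (int p) (- j) \<circ> zp_auto (int p) e u \<circ> zp_shear (int p) j)
      (zp_carrier (int p)) (zp_carrier (int p))"
    by (simp add: comp_assoc)
qed (simp add: zp_shear_mult zp_auto_mult)

lemma class_stabilizer_transitive_ZxZp:
  assumes p: "p > 1" and part: "partition_on (zp_carrier (int p)) \<D>"
    and S: "schur_zp (int p) ((`) (zp_shear (int p) j) ` \<D>)"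
    and C: "C \<in> \<D>" "g \<in> C" "g' \<in> C"
  shows "\<exists>\<sigma>\<in>class_stabilizer (ZxZp p) \<D>. \<sigma> g = g'"
proof -
  let ?P = "int p" and ?G = "ZxZp p"
  let ?s = "zp_shear ?P j" and ?s' = "zp_shear ?P (- j)"
  interpret S: schur_zp ?P "(`) ?s ` \<D>" by (rule S)
  have P: "?P > 0" using p by simp
  have sub: "Y \<subseteq> zp_carrier ?P" if "Y \<in> \<D>" for Y using part that unfolding partition_on_def by auto
  have cls_s: "S.cls (?s y) = ?s ` Y" if "Y \<in> \<D>" "y \<in> Y" for Y y
    using S.cls_eq that by blast
  have "?s g' \<in> S.auto_orbit (?s g)"
    using cls_s[OF C(1,2)] C(3) S.cls_eq_auto_orbit[of "?s g"] P by simp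
  then obtain e u where eu: "(e, u) \<in> S.cls (1, 1)" "?s g' = zp_auto ?P e u (?s g)"
    by (rule S.mem_auto_orbitE)
  note params = S.cls_one_one_params[OF eu(1)]
  define f where "f = ?s' \<circ> zp_auto ?P e u \<circ> ?s"
  define \<sigma> where "\<sigma> = restrict f (zp_carrier ?P)"
  obtain v where "0 < v" "v < ?P" "(u * v) mod ?P = 1"
    using prime_unit_inverse[OF S.prime_P params(2,3)] .
  then have "\<sigma> \<in> auto ?G"
    unfolding \<sigma>_def f_def using zp_shear_conj_mem_auto[OF _ params(1)] p by simp
  moreover have "\<sigma> ` Y \<subseteq> Y" if Y: "Y \<in> \<D>" for Y
  proof
    fix x assume "x \<in> \<sigma> ` Y"
    then obtain y where y: "y \<in> Y" "x = f y" unfolding \<sigma>_def using sub[OF Y] by auto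
    have "zp_auto ?P e u (?s y) \<in> S.auto_orbit (?s y)" by (rule S.mem_auto_orbitI[OF eu(1)])
    then have "zp_auto ?P e u (?s y) \<in> ?s ` Y"
      using S.cls_eq_auto_orbit[of "?s y"] cls_s[OF Y y(1)] P by simp
    then obtain y0 where y0: "y0 \<in> Y" "zp_auto ?P e u (?s y) = ?s y0" by blast
    have "x = y0" using y(2) y0(2) zp_shear_inverse[of y0] sub[OF Y] y0(1) unfolding f_def by auto
    then show "x \<in> Y" using y0(1) by simp
  qed
  moreover have "\<sigma> g = g'"
    using eu(2)[symmetric] zp_shear_inverse[of g' ?P j] sub[OF C(1)] C unfolding \<sigma>_def f_def by auto
  ultimately show ?thesis unfolding class_stabilizer_def by blast
qed

lemma automorphic_schur_ZxZp_shear: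
  assumes p: "p > 1" and S: "schur_zp (int p) ((`) (zp_shear (int p) j) ` \<D>)"
    and part: "partition_on (carrier (ZxZp p)) \<D>" and fin: "\<And>C. C \<in> \<D> \<Longrightarrow> finite C"
  shows "automorphic_schur TYPE('f::field) (ZxZp p) \<D>"
proof (rule automorphic_schurI[OF group_ZxZp part fin])
  show "finite (class_stabilizer (ZxZp p) \<D>)" by (rule finite_class_stabilizer_ZxZp[OF p part fin])
  have "partition_on (zp_carrier (int p)) \<D>" using part p by (simp add: carrier_ZxZp)
  then show "\<exists>\<sigma>\<in>class_stabilizer (ZxZp p) \<D>. \<sigma> g = g'" if "C \<in> \<D>" "g \<in> C" "g' \<in> C" for C g g'
    using class_stabilizer_transitive_ZxZp[OF p _ S that] by blast
qed

lemma schur_zp_shear_image_ZxZp: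
  assumes p: "Factorial_Ring.prime p" and S: "schur_partition TYPE('f::field_char_0) (ZxZp p) \<D>"
    and line: "S_subgroup (ZxZp p) \<D> (zp_line (int p) j)"
  shows "schur_zp (int p) ((`) (zp_shear (int p) j) ` \<D>)"
proof (rule schur_zp_shear_image)
  have p0: "p > 0" using p prime_gt_0_nat by blast
  then have part: "partition_on (zp_carrier (int p)) \<D>"
    using S unfolding schur_partition_def by (simp add: carrier_ZxZp)
  show "Factorial_Ring.prime (int p)" using p by simp
  show "partition_on (zp_carrier (int p)) \<D>" by (fact part)
  show "finite C" "zp_uminus (int p) ` C \<in> \<D>" if "C \<in> \<D>" for C
    using S that schur_partition_ZxZp_uminus[OF p0 S] unfolding schur_partition_def by auto
  show "{(0, 0)} \<in> \<D>" using S unfolding schur_partition_def by (simp add: one_ZxZp)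
  show "prod_coeff (int p) C E g = prod_coeff (int p) C E g'"
    if "C \<in> \<D>" "E \<in> \<D>" "W \<in> \<D>" "g \<in> W" "g' \<in> W" for C E W g g'
    by (rule schur_partition_ZxZp_prod_coeff[OF p0 S that])
  show "y \<in> zp_line (int p) j" if "C \<in> \<D>" "x \<in> C" "y \<in> C" "x \<in> zp_line (int p) j" for C x y
    using line Union_subset_mem_class[OF part _ that(1-3)] that(4) unfolding S_subgroup_def by metis
qed

theorem corollary3p5:
  fixes p :: nat and \<D> :: "(int \<times> int) set set"
  assumes "Factorial_Ring.prime p"
    and "schur_partition TYPE('f::field_char_0) (ZxZp p) \<D>"
    and "\<exists>i::int. S_subgroup (ZxZp p) \<D>
           (generate (ZxZp p) {((0, 1) [^]\<^bsub>ZxZp p\<^esub> i) \<otimes>\<^bsub>ZxZp p\<^esub> (1, 0)})"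
  shows "automorphic_schur TYPE('f) (ZxZp p) \<D>"
proof -
  have p: "p > 1" using assms(1) prime_gt_1_nat by blast
  obtain i :: int where "S_subgroup (ZxZp p) \<D> (zp_line (int p) (i mod int p))"
    using assms(3) generate_ZxZp_a_pow_z[OF p] by metis
  then have "schur_zp (int p) ((`) (zp_shear (int p) (i mod int p)) ` \<D>)"
    by (rule schur_zp_shear_image_ZxZp[OF assms(1,2)])
  moreover have "partition_on (carrier (ZxZp p)) \<D>" "\<And>C. C \<in> \<D> \<Longrightarrow> finite C"
    using assms(2) unfolding schur_partition_def by auto
  ultimately show ?thesis by (rule automorphic_schur_ZxZp_shear[OF p])
qed

end
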